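(* Consider the nonlinear program: minimize $f(x)$ subject to $\varphi_i(x)\le0$ ($i=1,\dots,s$), $\varphi_i(x)=0$ ($i=s+1,\dots,m$), where $f$ is $\mathcal C^{1,1}$ and each $\varphi_i$ is $\mathcal C^2$-smooth around a local minimizer $\bar x$. If MSCQ holds at $\bar x$, then there is $\bar y\in\mathbb{R}_+^s\times\mathbb{R}^{m-s}$ with $\nabla_xL(\bar x,\bar y)=0$ and $\langle\bar y,g(\bar x)\rangle=0$. If in addition this $\bar y$ is unique (in particular if LICQ holds at $\bar x$), then $$\langle z,w\rangle+\langle w,\nabla^2\langle\bar y,g\rangle(\bar x)w\rangle\ge0\quad\text{for all } w\in S(\bar x,\bar y),\ z\in\breve\partial^2f(\bar x)(w),$$ and if $\bar x$ is a strong local minimizer with modulus $\sigma>0$, then $\langle z,w\rangle+\langle w,\nabla^2\langle\bar y,g\rangle(\bar x)w\rangle\ge\sigma\|w\|^2$ for all such $w,z$.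
   Context: $g:=(\varphi_1,\dots,\varphi_m)$, $\Gamma$ the feasible set, $L(x,y):=f(x)+\langle y,g(x)\rangle$. $I(x):=\{i\le s:\varphi_i(x)=0\}$, $I_+(x,y):=\{i\in I(x):y_i>0\}$, $S(x,y):=\{w:\langle\nabla\varphi_i(x),w\rangle=0\ (i\in\{s+1,\dots,m\}\cup I_+(x,y)),\ \langle\nabla\varphi_i(x),w\rangle\ge0\ (i\in I(x)\setminus I_+(x,y))\}$. MSCQ at $\bar x$: $\operatorname{dist}(x;\Gamma)\le\kappa\big(\sum_{i\le s}\max\{\varphi_i(x),0\}+\sum_{i>s}|\varphi_i(x)|\big)$ for some $\kappa>0$ and all $x$ near $\bar x$. LICQ: $\{\nabla\varphi_i(\bar x):i\in I(\bar x)\cup\{s+1,\dots,m\}\}$ linearly independent. $\breve\partial^2f(\bar x)(w):=\{z:(z,-w)\in\widehat N_{\operatorname{gph}\nabla f}(\bar x,\nabla f(\bar x))\}$ with $\widehat N$ the regular (Fréchet) normal cone. Strong local minimizer with modulus $\sigma$: $f(x)\ge f(\bar x)+\frac\sigma2\|x-\bar x\|^2$ for feasible $x$ near $\bar x$. *)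

theory Defs
  imports "HOL-Analysis.Analysis"
begin

definition grad :: "('a::euclidean_space \<Rightarrow> real) \<Rightarrow> 'a \<Rightarrow> 'a" where
  "grad f x = (\<Sum>b\<in>Basis. frechet_derivative f (at x) b *\<^sub>R b)"

definition hess_quad :: "('a::euclidean_space \<Rightarrow> real) \<Rightarrow> 'a \<Rightarrow> 'a \<Rightarrow> real" where
  "hess_quad \<psi> x w = frechet_derivative (\<lambda>u. frechet_derivative \<psi> (at u) w) (at x) w"

definition C11_near :: "('a::euclidean_space \<Rightarrow> real) \<Rightarrow> 'a \<Rightarrow> bool" where
  "C11_near f xb \<longleftrightarrow> (\<exists>U L. open U \<and> xb \<in> U \<and> (\<forall>x\<in>U. f differentiable (at x))
      \<and> L-lipschitz_on U (grad f))"

definition C2_near :: "('a::euclidean_space \<Rightarrow> real) \<Rightarrow> 'a \<Rightarrow> bool" where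
  "C2_near \<phi> xb \<longleftrightarrow> (\<exists>U (D2 :: 'a \<Rightarrow> ('a \<Rightarrow>\<^sub>L 'a)). open U \<and> xb \<in> U
      \<and> (\<forall>x\<in>U. \<phi> differentiable (at x) \<and> (grad \<phi> has_derivative blinfun_apply (D2 x)) (at x))
      \<and> continuous_on U D2)"

definition feasible_set :: "nat \<Rightarrow> nat \<Rightarrow> (nat \<Rightarrow> 'a \<Rightarrow> real) \<Rightarrow> 'a set" where
  "feasible_set s m \<phi> = {x. (\<forall>i\<in>{1..s}. \<phi> i x \<le> 0) \<and> (\<forall>i\<in>{s+1..m}. \<phi> i x = 0)}"

definition local_minimizer :: "('a::metric_space \<Rightarrow> real) \<Rightarrow> 'a set \<Rightarrow> 'a \<Rightarrow> bool" where
  "local_minimizer f \<Gamma> xb \<longleftrightarrow> xb \<in> \<Gamma> \<and> (\<exists>\<epsilon>>0. \<forall>x\<in>\<Gamma>. dist x xb < \<epsilon> \<longrightarrow> f xb \<le> f x)"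

definition strong_local_minimizer ::
    "('a::real_normed_vector \<Rightarrow> real) \<Rightarrow> 'a set \<Rightarrow> 'a \<Rightarrow> real \<Rightarrow> bool" where
  "strong_local_minimizer f \<Gamma> xb \<sigma> \<longleftrightarrow> xb \<in> \<Gamma> \<and>
     (\<exists>\<epsilon>>0. \<forall>x\<in>\<Gamma>. dist x xb < \<epsilon> \<longrightarrow> f x \<ge> f xb + \<sigma> / 2 * (norm (x - xb))\<^sup>2)"

definition MSCQ :: "nat \<Rightarrow> nat \<Rightarrow> (nat \<Rightarrow> 'a::euclidean_space \<Rightarrow> real) \<Rightarrow> 'a \<Rightarrow> bool" where
  "MSCQ s m \<phi> xb \<longleftrightarrow> (\<exists>\<kappa>>0. \<exists>\<delta>>0. \<forall>x. dist x xb < \<delta> \<longrightarrow>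
     infdist x (feasible_set s m \<phi>) \<le>
       \<kappa> * ((\<Sum>i=1..s. max (\<phi> i x) 0) + (\<Sum>i=s+1..m. \<bar>\<phi> i x\<bar>)))"

definition active_set :: "nat \<Rightarrow> (nat \<Rightarrow> 'a \<Rightarrow> real) \<Rightarrow> 'a \<Rightarrow> nat set" where
  "active_set s \<phi> x = {i\<in>{1..s}. \<phi> i x = 0}"

definition LICQ :: "nat \<Rightarrow> nat \<Rightarrow> (nat \<Rightarrow> 'a::euclidean_space \<Rightarrow> real) \<Rightarrow> 'a \<Rightarrow> bool" where
  "LICQ s m \<phi> xb \<longleftrightarrow> (let J = active_set s \<phi> xb \<union> {s+1..m} in
     \<forall>c. (\<Sum>i\<in>J. c i *\<^sub>R grad (\<phi> i) xb) = 0 \<longrightarrow> (\<forall>i\<in>J. c i = 0))"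

text \<open>Lagrange multipliers y in R^s_+ x R^{m-s} (represented as functions nat => real,
  vanishing outside the index set {1..m}) with grad_x L(xb,y) = 0 and <y, g(xb)> = 0.\<close>
definition lagrange_multipliers ::
    "nat \<Rightarrow> nat \<Rightarrow> ('a::euclidean_space \<Rightarrow> real) \<Rightarrow> (nat \<Rightarrow> 'a \<Rightarrow> real) \<Rightarrow> 'a \<Rightarrow> (nat \<Rightarrow> real) set" where
  "lagrange_multipliers s m f \<phi> xb = {y.
     (\<forall>i. i \<notin> {1..m} \<longrightarrow> y i = 0) \<and> (\<forall>i\<in>{1..s}. y i \<ge> 0) \<and>
     grad f xb + (\<Sum>i=1..m. y i *\<^sub>R grad (\<phi> i) xb) = 0 \<and>
     (\<Sum>i=1..m. y i * \<phi> i xb) = 0}"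

definition critical_cone ::
    "nat \<Rightarrow> nat \<Rightarrow> (nat \<Rightarrow> 'a::euclidean_space \<Rightarrow> real) \<Rightarrow> 'a \<Rightarrow> (nat \<Rightarrow> real) \<Rightarrow> 'a set" where
  "critical_cone s m \<phi> x y = (let I = active_set s \<phi> x; Ip = {i\<in>I. y i > 0} in
     {w. (\<forall>i\<in>{s+1..m} \<union> Ip. grad (\<phi> i) x \<bullet> w = 0) \<and> (\<forall>i\<in>I - Ip. grad (\<phi> i) x \<bullet> w \<ge> 0)})"

definition regular_normal_cone :: "'a::real_inner set \<Rightarrow> 'a \<Rightarrow> 'a set" where
  "regular_normal_cone \<Omega> xb = {v. \<forall>e>0. \<exists>\<delta>>0. \<forall>x\<in>\<Omega>. dist x xb < \<delta> \<longrightarrow>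
      v \<bullet> (x - xb) \<le> e * norm (x - xb)}"

definition graph_grad :: "('a::euclidean_space \<Rightarrow> real) \<Rightarrow> ('a \<times> 'a) set" where
  "graph_grad f = {(x, grad f x) | x. f differentiable (at x)}"

definition second_subdiff :: "('a::euclidean_space \<Rightarrow> real) \<Rightarrow> 'a \<Rightarrow> 'a \<Rightarrow> 'a set" where
  "second_subdiff f xb w = {z. (z, - w) \<in> regular_normal_cone (graph_grad f) (xb, grad f xb)}"

end

theory Submission
  imports Defs
begin

text \<open>
  The second-order claims are proved for a minimizer with quadratic growth of modulus
  \<open>\<sigma> \<ge> 0\<close>; \<open>\<sigma> = 0\<close> is plain local minimality. Metric subregularity and the Lipschitz
  continuity of f give the exact penalty estimate
  \<open>f x \<ge> f xb + \<sigma>/2 |x - xb|\<^sup>2 - C violation x\<close> near xb. Along a linearized feasible direction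
  the violation is o(t), which yields the first-order condition, and Farkas' lemma turns it into a
  multiplier.

  If the multiplier yb is unique, a second Farkas argument produces for a critical direction w a
  correction u such that the arc \<open>xb - t w + t\<^sup>2 u\<close> violates the constraints only by
  \<open>o(t\<^sup>2)\<close>. Hence the Lagrangian grows at least like \<open>\<sigma>/2 t\<^sup>2 |w|\<^sup>2 - o(t\<^sup>2)\<close> along
  \<open>xb - t w\<close>, so there are points \<open>xb - t w\<close> where its slope in direction w is at most
  \<open>(\<epsilon> - \<sigma> |w|\<^sup>2) t\<close>. Since \<open>(z, - w)\<close> is a regular normal to the graph of grad f, that
  slope is at least \<open>- t (z \<bullet> w + \<langle>w, \<nabla>\<^sup>2\<langle>yb, g\<rangle> w\<rangle>) - o(t)\<close>.
\<close>

section \<open>Calculus\<close>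

lemma has_derivative_grad:
  fixes f :: "'a::euclidean_space \<Rightarrow> real"
  assumes "f differentiable (at x)"
  shows "(f has_derivative (\<lambda>h. grad f x \<bullet> h)) (at x)"
proof -
  let ?F = "frechet_derivative f (at x)"
  have d: "(f has_derivative ?F) (at x)" using assms frechet_derivative_works by blast
  then have lin: "linear ?F" using has_derivative_linear by blast
  have "?F h = grad f x \<bullet> h" for h
  proof -
    have "grad f x \<bullet> h = (\<Sum>b\<in>Basis. ?F b * (b \<bullet> h))"
      by (simp add: grad_def inner_sum_left)
    also have "\<dots> = (\<Sum>b\<in>Basis. ?F ((h \<bullet> b) *\<^sub>R b))"
      using lin by (simp add: linear_scale inner_commute mult.commute)
    also have "\<dots> = ?F (\<Sum>b\<in>Basis. (h \<bullet> b) *\<^sub>R b)"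
      using lin by (simp add: linear_sum)
    also have "\<dots> = ?F h" by (simp add: euclidean_representation)
    finally show ?thesis by simp
  qed
  then have "?F = (\<lambda>h. grad f x \<bullet> h)" by auto
  then show ?thesis using d by simp
qed

lemma onorm_inner_le: "onorm (\<lambda>h::'a::real_inner. g \<bullet> h) \<le> norm g"
  by (rule onorm_bound) (auto simp: Cauchy_Schwarz_ineq2)

lemma inner_derivative_lipschitz:
  fixes f :: "'a::real_inner \<Rightarrow> real"
  assumes "convex S"
    and "\<And>x. x \<in> S \<Longrightarrow> (f has_derivative (\<lambda>h. g x \<bullet> h)) (at x)"
    and "\<And>x. x \<in> S \<Longrightarrow> norm (g x) \<le> B"
    and "x \<in> S" "y \<in> S"
  shows "\<bar>f x - f y\<bar> \<le> B * norm (x - y)"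
proof -
  have "norm (f x - f y) \<le> B * norm (x - y)"
  proof (rule differentiable_bound[OF assms(1) _ _ assms(4,5)])
    show "(f has_derivative (\<lambda>h. g z \<bullet> h)) (at z within S)" if "z \<in> S" for z
      using assms(2)[OF that] by (rule has_derivative_at_withinI)
    show "onorm (\<lambda>h. g z \<bullet> h) \<le> B" if "z \<in> S" for z
      using onorm_inner_le[of "g z"] assms(3)[OF that] by linarith
  qed
  then show ?thesis by simp
qed

lemma eventually_linearization_along_ray:
  fixes F :: "'a::real_normed_vector \<Rightarrow> 'b::real_normed_vector"
  assumes F: "(F has_derivative F') (at x)" and \<eta>: "\<eta> > 0"
  shows "eventually (\<lambda>t. norm (F (x + t *\<^sub>R d) - F x - t *\<^sub>R F' d) \<le> \<eta> * t) (at_right 0)"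
proof -
  define e where "e = \<eta> / (norm d + 1)"
  have e: "e > 0" using \<eta> by (simp add: e_def add_nonneg_pos)
  have lin: "linear F'" using F has_derivative_linear by blast
  obtain \<delta> where \<delta>: "\<delta> > 0" and h\<delta>: "\<And>y. norm (y - x) < \<delta> \<Longrightarrow>
      norm (F y - F x - F' (y - x)) \<le> e * norm (y - x)"
    using F e unfolding has_derivative_at_alt by blast
  have "norm (F (x + t *\<^sub>R d) - F x - t *\<^sub>R F' d) \<le> \<eta> * t"
    if t: "0 < t" "t < \<delta> / (norm d + 1)" for t
  proof -
    have pos: "norm d + 1 > 0" by (smt (verit) norm_ge_zero)
    have "t * norm d \<le> t * (norm d + 1)" using t by simp
    also have "\<dots> < \<delta>" using t(2) pos by (simp only: pos_less_divide_eq)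
    finally have near: "norm ((x + t *\<^sub>R d) - x) < \<delta>" using t by simp
    have "norm (F (x + t *\<^sub>R d) - F x - t *\<^sub>R F' d) \<le> e * (t * norm d)"
      using h\<delta>[OF near] t lin by (simp add: linear_scale)
    also have "\<dots> = t * (\<eta> * (norm d / (norm d + 1)))" by (simp add: e_def)
    also have "\<dots> \<le> t * (\<eta> * 1)"
      using t \<eta> norm_ge_zero[of d]
      by (intro mult_left_mono) (auto simp: divide_le_eq add_nonneg_pos)
    finally show ?thesis by (simp add: mult.commute)
  qed
  moreover have "\<delta> / (norm d + 1) > 0" using \<delta> by (simp add: add_nonneg_pos)
  ultimately show ?thesis unfolding eventually_at_right_field by (auto intro!: exI)
qed

lemma MVT_quadratic_bound:
  fixes k k' :: "real \<Rightarrow> real"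
  assumes T: "0 < T" and k0: "k 0 = 0"
    and dk: "\<And>t. 0 \<le> t \<Longrightarrow> t \<le> T \<Longrightarrow> (k has_real_derivative k' t) (at t)"
    and bound: "\<And>t. 0 < t \<Longrightarrow> t < T \<Longrightarrow> \<bar>k' t\<bar> \<le> \<eta> * t"
  shows "\<bar>k T\<bar> \<le> \<eta> * T\<^sup>2"
proof -
  have "continuous_on {0..T} k"
  proof (rule continuous_at_imp_continuous_on, rule ballI)
    fix t assume "t \<in> {0..T}"
    then show "isCont k t" using DERIV_isCont[OF dk[of t]] by auto
  qed
  moreover have "k differentiable (at t)" if "0 < t" "t < T" for t
    using dk[of t] that unfolding real_differentiable_def by auto
  ultimately obtain l \<xi> where xi: "0 < \<xi>" "\<xi> < T" "DERIV k \<xi> :> l" "k T - k 0 = (T - 0) * l"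
    using MVT[OF T] by blast
  have "l = k' \<xi>" using DERIV_unique[OF xi(3) dk[of \<xi>]] xi by simp
  have "0 \<le> \<eta> * \<xi>" using bound[OF xi(1,2)] by linarith
  then have \<eta>: "0 \<le> \<eta>" using xi(1) by (simp add: zero_le_mult_iff)
  have "\<bar>k T\<bar> = T * \<bar>k' \<xi>\<bar>" using xi k0 T \<open>l = k' \<xi>\<close> by (simp add: abs_mult)
  also have "\<dots> \<le> T * (\<eta> * \<xi>)" using bound[OF xi(1,2)] T by (intro mult_left_mono) auto
  also have "\<dots> \<le> T * (\<eta> * T)" using xi \<eta> T by (intro mult_left_mono) auto
  finally show ?thesis by (simp add: power2_eq_square algebra_simps)
qed

lemma second_order_taylor:
  fixes \<psi> :: "'a::euclidean_space \<Rightarrow> real"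
  assumes r: "r > 0"
    and d1: "\<And>x. x \<in> ball xb r \<Longrightarrow> (\<psi> has_derivative (\<lambda>h. grad \<psi> x \<bullet> h)) (at x)"
    and d2: "(grad \<psi> has_derivative D) (at xb)"
    and e: "e > 0"
  shows "\<exists>\<delta>>0. \<forall>h. norm h < \<delta> \<longrightarrow>
           \<bar>\<psi> (xb + h) - \<psi> xb - grad \<psi> xb \<bullet> h - D h \<bullet> h / 2\<bar> \<le> e * (norm h)\<^sup>2"
proof -
  have lin: "linear D" using d2 has_derivative_linear by blast
  obtain d where d: "d > 0" and hd: "\<And>y. norm (y - xb) < d \<Longrightarrow>
      norm (grad \<psi> y - grad \<psi> xb - D (y - xb)) \<le> e * norm (y - xb)"
    using d2 e unfolding has_derivative_at_alt by blast
  have "\<bar>\<psi> (xb + h) - \<psi> xb - grad \<psi> xb \<bullet> h - D h \<bullet> h / 2\<bar> \<le> e * (norm h)\<^sup>2"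
    if h: "norm h < min d r" for h
  proof -
    define k where "k t = \<psi> (xb + t *\<^sub>R h) - \<psi> xb - t * (grad \<psi> xb \<bullet> h) - t\<^sup>2 * (D h \<bullet> h) / 2"
      for t
    define k' where "k' t = (grad \<psi> (xb + t *\<^sub>R h) - grad \<psi> xb - D (t *\<^sub>R h)) \<bullet> h" for t
    have near: "norm ((xb + t *\<^sub>R h) - xb) < min d r" if "0 \<le> t" "t \<le> 1" for t
      using h that mult_left_le_one_le[of "norm h" t] by simp
    have dk: "(k has_real_derivative k' t) (at t)" if t: "0 \<le> t" "t \<le> 1" for t
    proof -
      have ball: "xb + t *\<^sub>R h \<in> ball xb r" using near[OF t] by (simp add: dist_norm norm_minus_commute)
      have line: "((\<lambda>s. xb + s *\<^sub>R h) has_derivative (\<lambda>s. s *\<^sub>R h)) (at t)"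
        by (auto intro!: derivative_eq_intros)
      from diff_chain_at[OF line d1[OF ball]] have "((\<lambda>t. \<psi> (xb + t *\<^sub>R h)) has_real_derivative grad \<psi> (xb + t *\<^sub>R h) \<bullet> h) (at t)"
        unfolding has_field_derivative_def o_def
        by (rule has_derivative_eq_rhs) (auto simp: fun_eq_iff)
      then have "(k has_real_derivative
          grad \<psi> (xb + t *\<^sub>R h) \<bullet> h - grad \<psi> xb \<bullet> h - t * (D h \<bullet> h)) (at t)"
        unfolding k_def by (auto intro!: derivative_eq_intros simp: power2_eq_square)
      moreover have "k' t = grad \<psi> (xb + t *\<^sub>R h) \<bullet> h - grad \<psi> xb \<bullet> h - t * (D h \<bullet> h)"
        using lin by (simp add: k'_def linear_scale inner_diff_left)
      ultimately show ?thesis by simp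
    qed
    have bound: "\<bar>k' t\<bar> \<le> (e * (norm h)\<^sup>2) * t" if t: "0 < t" "t < 1" for t
    proof -
      have "\<bar>k' t\<bar> \<le> norm (grad \<psi> (xb + t *\<^sub>R h) - grad \<psi> xb - D (t *\<^sub>R h)) * norm h"
        unfolding k'_def by (rule Cauchy_Schwarz_ineq2)
      also have "\<dots> \<le> e * (t * norm h) * norm h"
        using hd[of "xb + t *\<^sub>R h"] near[of t] t by (intro mult_right_mono) auto
      finally show ?thesis by (simp add: power2_eq_square algebra_simps)
    qed
    have "k 0 = 0" by (simp add: k_def)
    from MVT_quadratic_bound[OF zero_less_one this dk bound]
    have "\<bar>k 1\<bar> \<le> e * (norm h)\<^sup>2 * 1\<^sup>2" .
    then show ?thesis by (simp add: k_def)
  qed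
  then show ?thesis using d r by (intro exI[of _ "min d r"]) auto
qed

lemma norm_arc_le:
  fixes w u :: "'a::real_normed_vector"
  assumes "0 \<le> t" "t \<le> 1"
  shows "norm (t *\<^sub>R w + t\<^sup>2 *\<^sub>R u) \<le> t * (norm w + norm u)"
proof -
  have "norm (t *\<^sub>R w + t\<^sup>2 *\<^sub>R u) \<le> t * norm w + t\<^sup>2 * norm u"
    using assms norm_triangle_ineq[of "t *\<^sub>R w" "t\<^sup>2 *\<^sub>R u"] by simp
  also have "t\<^sup>2 * norm u \<le> t * norm u"
    using assms by (intro mult_right_mono) (auto simp: power2_eq_square intro: mult_left_le_one_le)
  finally show ?thesis by (simp add: algebra_simps)
qed

lemma second_order_expansion_arc:
  fixes \<psi> :: "'a::euclidean_space \<Rightarrow> real"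
  assumes r: "r > 0"
    and d1: "\<And>x. x \<in> ball xb r \<Longrightarrow> (\<psi> has_derivative (\<lambda>h. grad \<psi> x \<bullet> h)) (at x)"
    and d2: "(grad \<psi> has_derivative D) (at xb)"
    and \<eta>: "\<eta> > 0"
  shows "eventually (\<lambda>t. \<bar>\<psi> (xb + t *\<^sub>R w + t\<^sup>2 *\<^sub>R u) - \<psi> xb - t * (grad \<psi> xb \<bullet> w)
            - t\<^sup>2 * (grad \<psi> xb \<bullet> u + D w \<bullet> w / 2)\<bar> \<le> \<eta> * t\<^sup>2) (at_right 0)"
proof -
  define h where "h t = t *\<^sub>R w + t\<^sup>2 *\<^sub>R u" for t :: real
  define R where "R t = D w \<bullet> u + D u \<bullet> w + t * (D u \<bullet> u)" for t :: real
  define M where "M = norm w + norm u"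
  define e where "e = \<eta> / (2 * (M\<^sup>2 + 1))"
  have e: "e > 0" using \<eta> by (simp add: e_def add_nonneg_pos)
  have "e * M\<^sup>2 = \<eta> / 2 * (M\<^sup>2 / (M\<^sup>2 + 1))" by (simp add: e_def)
  also have "\<dots> \<le> \<eta> / 2 * 1"
  proof -
    have "0 < M\<^sup>2 + 1" by (smt (verit) zero_le_power2)
    then have "M\<^sup>2 / (M\<^sup>2 + 1) \<le> 1" by (simp add: divide_le_eq)
    then show ?thesis using \<eta> by (intro mult_left_mono) auto
  qed
  finally have eM: "e * M\<^sup>2 \<le> \<eta> / 2" by simp
  obtain \<delta> where \<delta>: "\<delta> > 0" and taylor: "\<And>h. norm h < \<delta> \<Longrightarrow>
      \<bar>\<psi> (xb + h) - \<psi> xb - grad \<psi> xb \<bullet> h - D h \<bullet> h / 2\<bar> \<le> e * (norm h)\<^sup>2"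
    using second_order_taylor[OF r d1 d2 e] by blast
  have lin: "linear D" using d2 has_derivative_linear by blast
  have "((\<lambda>t. norm (h t)) \<longlongrightarrow> norm (h 0)) (at_right 0)"
    unfolding h_def by (intro tendsto_intros)
  then have ev_h: "eventually (\<lambda>t. norm (h t) < \<delta>) (at_right 0)"
    using \<delta> by (intro order_tendstoD(2)) (auto simp: h_def)
  have "((\<lambda>t. \<bar>t * R t\<bar>) \<longlongrightarrow> \<bar>0 * R 0\<bar>) (at_right 0)"
    unfolding R_def by (intro tendsto_intros)
  then have ev_R: "eventually (\<lambda>t. \<bar>t * R t\<bar> < \<eta>) (at_right 0)"
    using \<eta> by (intro order_tendstoD(2)) auto
  have ev_t: "eventually (\<lambda>t. 0 < t \<and> t \<le> 1) (at_right (0::real))"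
    unfolding eventually_at_right_field by (intro exI[of _ 1]) auto
  show ?thesis
  proof (rule eventually_mono[OF eventually_conj[OF ev_h eventually_conj[OF ev_R ev_t]]])
    fix t :: real assume ht: "norm (h t) < \<delta> \<and> \<bar>t * R t\<bar> < \<eta> \<and> 0 < t \<and> t \<le> 1"
    have nh: "norm (h t) \<le> t * M" using norm_arc_le[of t w u] ht by (simp add: h_def M_def)
    have "e * (norm (h t))\<^sup>2 \<le> e * (t * M)\<^sup>2"
      using nh e by (intro mult_left_mono power_mono) auto
    also have "\<dots> = t\<^sup>2 * (e * M\<^sup>2)" by (simp add: power_mult_distrib)
    also have "\<dots> \<le> t\<^sup>2 * (\<eta> / 2)" using eM by (intro mult_left_mono) auto
    finally have rem: "\<bar>\<psi> (xb + h t) - \<psi> xb - grad \<psi> xb \<bullet> h t - D (h t) \<bullet> h t / 2\<bar> \<le> t\<^sup>2 * (\<eta> / 2)"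
      using taylor[of "h t"] ht by linarith
    have "\<bar>t\<^sup>2 * (t * R t) / 2\<bar> = t\<^sup>2 * (\<bar>t * R t\<bar> / 2)" by (simp add: abs_mult)
    also have "\<dots> \<le> t\<^sup>2 * (\<eta> / 2)" using ht by (intro mult_left_mono) auto
    finally have cub: "\<bar>t\<^sup>2 * (t * R t) / 2\<bar> \<le> t\<^sup>2 * (\<eta> / 2)" .
    have "D (h t) \<bullet> h t = t\<^sup>2 * (D w \<bullet> w) + t\<^sup>2 * (t * R t)"
      unfolding h_def R_def using lin
      by (simp add: linear_add linear_scale inner_add_left inner_add_right power2_eq_square
          algebra_simps)
    then have eq: "\<psi> (xb + t *\<^sub>R w + t\<^sup>2 *\<^sub>R u) - \<psi> xb - t * (grad \<psi> xb \<bullet> w)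
        - t\<^sup>2 * (grad \<psi> xb \<bullet> u + D w \<bullet> w / 2)
        = (\<psi> (xb + h t) - \<psi> xb - grad \<psi> xb \<bullet> h t - D (h t) \<bullet> h t / 2) + t\<^sup>2 * (t * R t) / 2"
      by (simp add: h_def inner_add_right add.assoc algebra_simps)
    then show "\<bar>\<psi> (xb + t *\<^sub>R w + t\<^sup>2 *\<^sub>R u) - \<psi> xb - t * (grad \<psi> xb \<bullet> w)
        - t\<^sup>2 * (grad \<psi> xb \<bullet> u + D w \<bullet> w / 2)\<bar> \<le> \<eta> * t\<^sup>2"
      unfolding eq
      using rem cub abs_triangle_ineq[of "\<psi> (xb + h t) - \<psi> xb - grad \<psi> xb \<bullet> h t - D (h t) \<bullet> h t / 2"
          "t\<^sup>2 * (t * R t) / 2"]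
      by (simp add: field_simps)
  qed
qed

lemma exists_dist_lt_infdist_add:
  assumes "a \<in> A" "e > 0"
  shows "\<exists>p\<in>A. dist x p < infdist x A + e"
proof (rule ccontr)
  assume "\<not> ?thesis"
  then have "infdist x A + e \<le> Inf (dist x ` A)"
    using assms by (intro cINF_greatest) auto
  moreover have "infdist x A = Inf (dist x ` A)" by (rule infdist_notempty) (use assms in auto)
  ultimately show False using assms by linarith
qed

lemma power2_le_power2_add:
  fixes a b d R :: real
  assumes "0 \<le> a" "0 \<le> b" "0 \<le> d" "a \<le> b + d" "a \<le> R" "b \<le> R"
  shows "a\<^sup>2 \<le> b\<^sup>2 + 2 * R * d"
proof (cases "a \<le> b")
  case True
  then have "a\<^sup>2 \<le> b\<^sup>2" using assms by (intro power_mono) auto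
  moreover have "0 \<le> R * d" using assms by simp
  ultimately show ?thesis by linarith
next
  case False
  have "a\<^sup>2 - b\<^sup>2 = (a - b) * (a + b)" by (simp add: power2_eq_square algebra_simps)
  also have "\<dots> \<le> d * (2 * R)" using False assms by (intro mult_mono) auto
  finally show ?thesis by (simp add: algebra_simps)
qed

lemma tendsto_arc:
  fixes x0 :: "'a::real_normed_vector"
  shows "((\<lambda>t. x0 + t *\<^sub>R w + t\<^sup>2 *\<^sub>R u) \<longlongrightarrow> x0) (at_right 0)"
proof -
  have "((\<lambda>t. x0 + t *\<^sub>R w + t\<^sup>2 *\<^sub>R u) \<longlongrightarrow> x0 + (0::real) *\<^sub>R w + 0\<^sup>2 *\<^sub>R u) (at_right 0)"
    by (intro tendsto_intros)
  then show ?thesis by simp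
qed

lemma eventually_at_right_0_witness:
  assumes "eventually P (at_right (0::real))"
  obtains t where "t > 0" "P t"
proof -
  have "eventually (\<lambda>t. t > 0 \<and> P t) (at_right (0::real))"
    using eventually_conj[OF eventually_at_right_less assms] .
  then show ?thesis using eventually_happens'[of "at_right (0::real)"] that by auto
qed

lemma eventually_at_right_0_norm_less:
  assumes "(c \<longlongrightarrow> x0) (at_right (0::real))" "\<delta> > 0"
  shows "eventually (\<lambda>t. norm (c t - x0) < \<delta>) (at_right 0)"
  using assms unfolding tendsto_iff dist_norm by blast

section \<open>Farkas' lemma\<close>

definition mixed_cone :: "'i set \<Rightarrow> 'i set \<Rightarrow> ('i \<Rightarrow> 'v::real_vector) \<Rightarrow> 'v set" where
  "mixed_cone J E g = {x. \<exists>c. (\<forall>j\<in>J-E. c j \<ge> 0) \<and> x = (\<Sum>j\<in>J. c j *\<^sub>R g j)}"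

lemma convex_cone_sum:
  assumes "convex_cone S" "\<And>j. j \<in> A \<Longrightarrow> h j \<in> S"
  shows "sum h A \<in> S"
proof (cases "finite A")
  case True
  then show ?thesis using assms(2)
  proof (induction A rule: finite_induct)
    case empty then show ?case using assms(1) convex_cone_contains_0 by simp
  next
    case (insert a A)
    then have "h a \<in> S" "sum h A \<in> S" by auto
    then show ?case using insert(1,2) assms(1) convex_cone_add by simp
  qed
qed (use assms(1) convex_cone_contains_0 in simp)

lemma convex_cone_mixed_cone: "convex_cone (mixed_cone J E g)"
  unfolding convex_cone_iff
proof (intro conjI ballI allI impI)
  show "0 \<in> mixed_cone J E g" unfolding mixed_cone_def by (auto intro!: exI[of _ "\<lambda>_. 0"])
  fix x y assume "x \<in> mixed_cone J E g" "y \<in> mixed_cone J E g"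
  then obtain c c' where "\<forall>j\<in>J-E. c j \<ge> 0" "x = (\<Sum>j\<in>J. c j *\<^sub>R g j)"
      "\<forall>j\<in>J-E. c' j \<ge> 0" "y = (\<Sum>j\<in>J. c' j *\<^sub>R g j)" unfolding mixed_cone_def by blast
  then show "x + y \<in> mixed_cone J E g" unfolding mixed_cone_def
    by (intro CollectI exI[of _ "\<lambda>j. c j + c' j"]) (auto simp: sum.distrib scaleR_add_left)
next
  fix x and a :: real assume "x \<in> mixed_cone J E g" "0 \<le> a"
  then obtain c where "\<forall>j\<in>J-E. c j \<ge> 0" "x = (\<Sum>j\<in>J. c j *\<^sub>R g j)"
    unfolding mixed_cone_def by blast
  then show "a *\<^sub>R x \<in> mixed_cone J E g" using \<open>0 \<le> a\<close> unfolding mixed_cone_def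
    by (intro CollectI exI[of _ "\<lambda>j. a * c j"]) (auto simp: scaleR_sum_right)
qed

lemma mixed_cone_eq_convex_cone_hull:
  assumes fin: "finite J" and EJ: "E \<subseteq> J"
  shows "mixed_cone J E g = convex_cone hull (g ` J \<union> uminus ` g ` E)"
    (is "_ = convex_cone hull ?S")
proof
  have "?S \<subseteq> mixed_cone J E g"
  proof
    fix x assume "x \<in> ?S"
    then consider j where "j \<in> J" "x = 1 *\<^sub>R g j" | j where "j \<in> E" "x = (-1) *\<^sub>R g j"
      by auto
    then show "x \<in> mixed_cone J E g"
    proof cases
      case (1 j)
      then show ?thesis unfolding mixed_cone_def
        by (intro CollectI exI[of _ "\<lambda>i. if i = j then 1 else 0"])
           (auto simp: if_distrib[of "\<lambda>c. c *\<^sub>R _"] sum.delta[OF fin] cong: if_cong)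
    next
      case (2 j)
      then have "j \<in> J" using EJ by auto
      with 2 show ?thesis unfolding mixed_cone_def
        by (intro CollectI exI[of _ "\<lambda>i. if i = j then -1 else 0"])
           (auto simp: if_distrib[of "\<lambda>c. c *\<^sub>R _"] sum.delta[OF fin] cong: if_cong)
    qed
  qed
  then show "convex_cone hull ?S \<subseteq> mixed_cone J E g"
    using convex_cone_mixed_cone by (rule hull_minimal)
next
  show "mixed_cone J E g \<subseteq> convex_cone hull ?S"
  proof
    fix x assume "x \<in> mixed_cone J E g"
    then obtain c where c: "\<forall>j\<in>J-E. c j \<ge> 0" "x = (\<Sum>j\<in>J. c j *\<^sub>R g j)"
      unfolding mixed_cone_def by blast
    have "c j *\<^sub>R g j \<in> convex_cone hull ?S" if "j \<in> J" for j
    proof (cases "c j \<ge> 0")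
      case True
      have "g j \<in> convex_cone hull ?S" using that by (auto intro: hull_inc)
      then show ?thesis using True convex_cone_hull_mul by blast
    next
      case False
      then have "j \<in> E" using c that by auto
      then have "- g j \<in> convex_cone hull ?S" by (intro hull_inc UnI2 imageI)
      then have "(- c j) *\<^sub>R (- g j) \<in> convex_cone hull ?S"
        using False convex_cone_hull_mul by (metis linorder_not_le neg_0_le_iff_le less_imp_le)
      then show ?thesis by simp
    qed
    then show "x \<in> convex_cone hull ?S"
      unfolding c(2) by (intro convex_cone_sum[OF convex_cone_convex_cone_hull])
  qed
qed

lemma farkas:
  fixes g :: "'i \<Rightarrow> 'v::euclidean_space"
  assumes fin: "finite J" and EJ: "E \<subseteq> J" and v: "v \<notin> mixed_cone J E g"
  shows "\<exists>d. d \<bullet> v < 0 \<and> (\<forall>j\<in>J. d \<bullet> g j \<ge> 0) \<and> (\<forall>j\<in>E. d \<bullet> g j = 0)"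
proof -
  let ?K = "mixed_cone J E g"
  have cc: "convex_cone ?K" by (rule convex_cone_mixed_cone)
  have "closed ?K"
    unfolding mixed_cone_eq_convex_cone_hull[OF fin EJ]
    using fin finite_subset[OF EJ fin] by (intro closed_convex_cone_hull) simp
  then obtain a b where ab: "a \<bullet> v < b" "\<forall>x\<in>?K. a \<bullet> x > b"
    using separating_hyperplane_closed_point[OF _ _ v] cc by (auto simp: convex_cone_def)
  have b0: "b < 0" using ab(2) convex_cone_contains_0[OF cc] by force
  have pos: "a \<bullet> x \<ge> 0" if "x \<in> ?K" for x
  proof (rule ccontr)
    assume "\<not> a \<bullet> x \<ge> 0"
    then have neg: "a \<bullet> x < 0" by simp
    have "0 \<le> b / (a \<bullet> x)" using b0 neg by (simp add: divide_nonpos_neg)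
    with cc have "(b / (a \<bullet> x)) *\<^sub>R x \<in> ?K" using that by (rule convex_cone_scaleR)
    then have "a \<bullet> ((b / (a \<bullet> x)) *\<^sub>R x) > b" using ab by blast
    then show False using neg by simp
  qed
  have gen: "g j \<in> ?K" "j \<in> E \<Longrightarrow> - g j \<in> ?K" if "j \<in> J" for j
    using that unfolding mixed_cone_eq_convex_cone_hull[OF fin EJ] by (auto intro: hull_inc)
  have "a \<bullet> g j = 0" if "j \<in> E" for j
    using pos[OF gen(1)] pos[OF gen(2)] that EJ by (smt (verit, best) inner_minus_right subsetD)
  then show ?thesis using ab b0 pos gen(1) by (intro exI[of _ a]) auto
qed

section \<open>Exact penalty and first-order conditions\<close>

locale nlp_local_growth =
  fixes f :: "'a::euclidean_space \<Rightarrow> real" and \<phi> :: "nat \<Rightarrow> 'a \<Rightarrow> real"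
    and s m :: nat and xb :: 'a and r Lf :: real and D :: "nat \<Rightarrow> 'a \<Rightarrow> 'a" and \<sigma> :: real
  assumes s_le_m: "s \<le> m" and r_pos: "r > 0"
    and f_deriv: "\<And>x. x \<in> ball xb r \<Longrightarrow> (f has_derivative (\<lambda>h. grad f x \<bullet> h)) (at x)"
    and grad_f_lipschitz: "Lf-lipschitz_on (ball xb r) (grad f)"
    and phi_deriv: "\<And>i x. i \<in> {1..m} \<Longrightarrow> x \<in> ball xb r \<Longrightarrow>
        (\<phi> i has_derivative (\<lambda>h. grad (\<phi> i) x \<bullet> h)) (at x)"
    and grad_phi_deriv: "\<And>i. i \<in> {1..m} \<Longrightarrow> (grad (\<phi> i) has_derivative D i) (at xb)"
    and xb_feasible: "xb \<in> feasible_set s m \<phi>"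
    and growth: "\<exists>\<epsilon>>0. \<forall>x\<in>feasible_set s m \<phi>. dist x xb < \<epsilon> \<longrightarrow>
        f x \<ge> f xb + \<sigma> / 2 * (norm (x - xb))\<^sup>2"
    and sigma_nonneg: "\<sigma> \<ge> 0"
    and mscq: "MSCQ s m \<phi> xb"
begin

definition violation :: "'a \<Rightarrow> real" where
  "violation x = (\<Sum>i=1..s. max (\<phi> i x) 0) + (\<Sum>i=s+1..m. \<bar>\<phi> i x\<bar>)"

lemma violation_nonneg: "violation x \<ge> 0"
  unfolding violation_def by (intro add_nonneg_nonneg sum_nonneg) auto

lemma xb_in_ball: "xb \<in> ball xb r"
  using r_pos by simp

lemma f_lipschitz: "\<exists>B\<ge>0. \<forall>x\<in>ball xb r. \<forall>y\<in>ball xb r. \<bar>f x - f y\<bar> \<le> B * norm (x - y)"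
proof -
  have Lf: "Lf \<ge> 0" using grad_f_lipschitz by (simp add: lipschitz_on_def)
  define B where "B = norm (grad f xb) + Lf * r"
  have bound: "norm (grad f x) \<le> B" if "x \<in> ball xb r" for x
  proof -
    have "norm (grad f x - grad f xb) \<le> Lf * dist x xb"
      using grad_f_lipschitz that xb_in_ball by (simp add: lipschitz_on_def dist_norm)
    also have "\<dots> \<le> Lf * r" using that Lf by (intro mult_left_mono) (auto simp: dist_commute)
    finally show ?thesis
      unfolding B_def using norm_triangle_sub[of "grad f x" "grad f xb"] by linarith
  qed
  have "B \<ge> 0" unfolding B_def using Lf r_pos by simp
  with inner_derivative_lipschitz[OF convex_ball f_deriv bound] show ?thesis by blast
qed

lemma growth_near_feasible_point:
  obtains \<rho> c where "\<rho> > 0" "c \<ge> 0"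
    and "\<And>x p. norm (x - xb) < \<rho> \<Longrightarrow> p \<in> feasible_set s m \<phi> \<Longrightarrow> norm (x - p) < 2 * \<rho> \<Longrightarrow>
           f x \<ge> f xb + \<sigma> / 2 * (norm (x - xb))\<^sup>2 - c * norm (x - p)"
proof -
  obtain \<epsilon> where \<epsilon>: "\<epsilon> > 0" and hmin: "\<And>x. x \<in> feasible_set s m \<phi> \<Longrightarrow> dist x xb < \<epsilon> \<Longrightarrow>
      f x \<ge> f xb + \<sigma> / 2 * (norm (x - xb))\<^sup>2"
    using growth by blast
  obtain B where B: "B \<ge> 0"
    "\<And>x y. x \<in> ball xb r \<Longrightarrow> y \<in> ball xb r \<Longrightarrow> \<bar>f x - f y\<bar> \<le> B * norm (x - y)"
    using f_lipschitz by blast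
  define \<rho> where "\<rho> = min \<epsilon> r / 3"
  have \<rho>: "\<rho> > 0" "3 * \<rho> \<le> \<epsilon>" "3 * \<rho> \<le> r" using \<epsilon> r_pos by (auto simp: \<rho>_def)
  define c where "c = 3 * \<sigma> * \<rho> + B"
  have main: "f x \<ge> f xb + \<sigma> / 2 * (norm (x - xb))\<^sup>2 - c * norm (x - p)"
    if x: "norm (x - xb) < \<rho>" and p: "p \<in> feasible_set s m \<phi>" "norm (x - p) < 2 * \<rho>" for x p
  proof -
    have px: "norm (p - xb) < 3 * \<rho>"
      using norm_triangle_ineq[of "p - x" "x - xb"] x p(2) norm_minus_commute[of p x] by simp
    have balls: "x \<in> ball xb r" "p \<in> ball xb r"
      using x px \<rho> by (auto simp: dist_norm norm_minus_commute)
    have fp: "f p \<ge> f xb + \<sigma> / 2 * (norm (p - xb))\<^sup>2"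
      using hmin[OF p(1)] px \<rho> by (simp add: dist_norm)
    have "(norm (x - xb))\<^sup>2 \<le> (norm (p - xb))\<^sup>2 + 2 * (3 * \<rho>) * norm (x - p)"
      using norm_triangle_ineq[of "x - p" "p - xb"] x px \<rho>
      by (intro power2_le_power2_add) auto
    then have "\<sigma> / 2 * (norm (x - xb))\<^sup>2 \<le> \<sigma> / 2 * (norm (p - xb))\<^sup>2 + 3 * \<sigma> * \<rho> * norm (x - p)"
      using mult_left_mono[of _ _ "\<sigma> / 2"] sigma_nonneg by (fastforce simp: algebra_simps)
    moreover have "f x \<ge> f p - B * norm (x - p)" using B(2)[OF balls] by linarith
    ultimately show ?thesis using fp unfolding c_def by (simp add: algebra_simps)
  qed
  show ?thesis using \<rho> B(1) sigma_nonneg main by (intro that[of \<rho> c]) (auto simp: c_def)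
qed

lemma exact_penalty:
  obtains \<rho> C where "\<rho> > 0"
    and "\<And>x. norm (x - xb) < \<rho> \<Longrightarrow> f x \<ge> f xb + \<sigma> / 2 * (norm (x - xb))\<^sup>2 - C * violation x"
proof -
  obtain \<kappa> \<delta> where \<delta>: "\<delta> > 0" and subreg: "\<And>x. dist x xb < \<delta> \<Longrightarrow>
      infdist x (feasible_set s m \<phi>) \<le> \<kappa> * violation x"
    using mscq unfolding MSCQ_def violation_def by blast
  obtain \<rho> c where \<rho>: "\<rho> > 0" and c: "c \<ge> 0" and near: "\<And>x p. norm (x - xb) < \<rho> \<Longrightarrow>
      p \<in> feasible_set s m \<phi> \<Longrightarrow> norm (x - p) < 2 * \<rho> \<Longrightarrow>
      f x \<ge> f xb + \<sigma> / 2 * (norm (x - xb))\<^sup>2 - c * norm (x - p)"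
    using growth_near_feasible_point by blast
  have penalty: "f x \<ge> f xb + \<sigma> / 2 * (norm (x - xb))\<^sup>2 - c * \<kappa> * violation x"
    if x: "norm (x - xb) < min \<rho> \<delta>" for x
  proof (rule field_le_epsilon)
    fix e :: real assume e: "e > 0"
    define \<eta> where "\<eta> = min (\<rho> / 2) (e / (c + 1))"
    have \<eta>: "\<eta> > 0" "\<eta> < \<rho>" using \<rho> e c by (auto simp: \<eta>_def)
    have "c * \<eta> \<le> c * (e / (c + 1))" using c by (intro mult_left_mono) (auto simp: \<eta>_def)
    also have "\<dots> \<le> e" using c e by (simp add: field_simps)
    finally have c\<eta>: "c * \<eta> \<le> e" .
    obtain p where p: "p \<in> feasible_set s m \<phi>" "dist x p < infdist x (feasible_set s m \<phi>) + \<eta>"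
      using exists_dist_lt_infdist_add[OF xb_feasible \<eta>(1)] by blast
    have "infdist x (feasible_set s m \<phi>) \<le> \<kappa> * violation x"
      using subreg[of x] x by (simp add: dist_norm)
    moreover have "infdist x (feasible_set s m \<phi>) \<le> norm (x - xb)"
      using infdist_le[OF xb_feasible, of x] by (simp add: dist_norm)
    ultimately have xp: "norm (x - p) \<le> \<kappa> * violation x + \<eta>" "norm (x - p) < 2 * \<rho>"
      using p(2) x \<eta> by (auto simp: dist_norm)
    have "c * norm (x - p) \<le> c * (\<kappa> * violation x + \<eta>)" using xp(1) c by (rule mult_left_mono)
    then show "f xb + \<sigma> / 2 * (norm (x - xb))\<^sup>2 - c * \<kappa> * violation x \<le> f x + e"
      using near[OF _ p(1) xp(2)] x c\<eta> by (simp add: algebra_simps)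
  qed
  show ?thesis using \<rho> \<delta> penalty by (intro that[of "min \<rho> \<delta>" "c * \<kappa>"]) auto
qed

abbreviation "Act \<equiv> active_set s \<phi> xb"
abbreviation "Eq \<equiv> {s+1..m}"

lemma Act_subset: "Act \<subseteq> {1..s}"
  by (auto simp: active_set_def)

lemma Act_Eq_disjoint: "Act \<inter> Eq = {}"
  by (auto simp: active_set_def)

lemma finite_Act: "finite Act"
  using Act_subset finite_subset by blast

lemma Act_Eq_subset: "Act \<union> Eq \<subseteq> {1..m}"
  using Act_subset s_le_m by auto

lemma feasible_ineq: "i \<in> {1..s} \<Longrightarrow> \<phi> i xb \<le> 0"
  using xb_feasible by (simp add: feasible_set_def)

lemma feasible_eq: "i \<in> Eq \<Longrightarrow> \<phi> i xb = 0"
  using xb_feasible by (simp add: feasible_set_def)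

lemma violation_eventually_le:
  fixes c :: "real \<Rightarrow> 'a" and e :: "real \<Rightarrow> real"
  assumes ct: "(c \<longlongrightarrow> xb) (at_right 0)"
    and act: "\<And>i. i \<in> Act \<Longrightarrow> eventually (\<lambda>t. \<phi> i (c t) \<le> e t) (at_right 0)"
    and eq: "\<And>i. i \<in> Eq \<Longrightarrow> eventually (\<lambda>t. \<bar>\<phi> i (c t)\<bar> \<le> e t) (at_right 0)"
    and e0: "eventually (\<lambda>t. e t \<ge> 0) (at_right 0)"
  shows "eventually (\<lambda>t. violation (c t) \<le> real m * e t) (at_right 0)"
proof -
  have ineq: "eventually (\<lambda>t. max (\<phi> i (c t)) 0 \<le> e t) (at_right 0)" if i: "i \<in> {1..s}" for i
  proof (cases "i \<in> Act")
    case True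
    then show ?thesis using act[OF True] e0 by (auto elim: eventually_mono[OF eventually_conj])
  next
    case False
    then have neg: "\<phi> i xb < 0" using feasible_ineq[OF i] i by (auto simp: active_set_def)
    have "isCont (\<phi> i) xb"
      using phi_deriv[OF _ xb_in_ball] i s_le_m has_derivative_continuous by fastforce
    then have "((\<lambda>t. \<phi> i (c t)) \<longlongrightarrow> \<phi> i xb) (at_right 0)"
      using isCont_tendsto_compose ct by blast
    then have "eventually (\<lambda>t. \<phi> i (c t) < 0) (at_right 0)"
      using neg by (rule order_tendstoD)
    then show ?thesis using e0 by (auto elim: eventually_mono[OF eventually_conj])
  qed
  have all1: "eventually (\<lambda>t. \<forall>i\<in>{1..s}. max (\<phi> i (c t)) 0 \<le> e t) (at_right 0)"
    using ineq by (intro eventually_ball_finite) auto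
  have all2: "eventually (\<lambda>t. \<forall>i\<in>Eq. \<bar>\<phi> i (c t)\<bar> \<le> e t) (at_right 0)"
    using eq by (intro eventually_ball_finite) auto
  show ?thesis
  proof (rule eventually_mono[OF eventually_conj[OF all1 all2]])
    fix t assume h: "(\<forall>i\<in>{1..s}. max (\<phi> i (c t)) 0 \<le> e t) \<and> (\<forall>i\<in>Eq. \<bar>\<phi> i (c t)\<bar> \<le> e t)"
    have "violation (c t) \<le> (\<Sum>i=1..s. e t) + (\<Sum>i=s+1..m. e t)"
      unfolding violation_def using h by (intro add_mono sum_mono) auto
    also have "\<dots> = real m * e t" using s_le_m by (simp add: of_nat_diff algebra_simps)
    finally show "violation (c t) \<le> real m * e t" .
  qed
qed

lemma violation_along_direction:
  assumes dA: "\<And>i. i \<in> Act \<Longrightarrow> grad (\<phi> i) xb \<bullet> d \<le> 0"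
    and dE: "\<And>i. i \<in> Eq \<Longrightarrow> grad (\<phi> i) xb \<bullet> d = 0"
    and \<eta>: "\<eta> > 0"
  shows "eventually (\<lambda>t. violation (xb + t *\<^sub>R d) \<le> real m * (\<eta> * t)) (at_right 0)"
proof (rule violation_eventually_le)
  show "((\<lambda>t. xb + t *\<^sub>R d) \<longlongrightarrow> xb) (at_right 0)" using tendsto_arc[of xb d 0] by simp
  have ray: "eventually (\<lambda>t. \<bar>\<phi> i (xb + t *\<^sub>R d) - \<phi> i xb - t * (grad (\<phi> i) xb \<bullet> d)\<bar> \<le> \<eta> * t)
      (at_right 0)" if "i \<in> {1..m}" for i
    using eventually_linearization_along_ray[OF phi_deriv[OF that xb_in_ball] \<eta>, of d] by simp
  fix i assume i: "i \<in> Act"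
  then have i': "i \<in> {1..m}" "\<phi> i xb = 0" using Act_Eq_subset by (auto simp: active_set_def)
  show "eventually (\<lambda>t. \<phi> i (xb + t *\<^sub>R d) \<le> \<eta> * t) (at_right 0)"
  proof (rule eventually_mono[OF eventually_conj[OF ray[OF i'(1)] eventually_at_right_less]])
    fix t assume "\<bar>\<phi> i (xb + t *\<^sub>R d) - \<phi> i xb - t * (grad (\<phi> i) xb \<bullet> d)\<bar> \<le> \<eta> * t \<and> 0 < t"
    moreover have "t * (grad (\<phi> i) xb \<bullet> d) \<le> 0" if "t > 0"
      using dA[OF i] that by (simp add: mult_nonneg_nonpos)
    ultimately show "\<phi> i (xb + t *\<^sub>R d) \<le> \<eta> * t" using i'(2) by (simp add: abs_le_iff)
  qed
next
  fix i assume i: "i \<in> Eq"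
  then have "i \<in> {1..m}" using s_le_m by auto
  then show "eventually (\<lambda>t. \<bar>\<phi> i (xb + t *\<^sub>R d)\<bar> \<le> \<eta> * t) (at_right 0)"
    using eventually_linearization_along_ray[OF phi_deriv[OF _ xb_in_ball] \<eta>, of i d]
    by (auto elim!: eventually_mono simp: feasible_eq[OF i] dE[OF i])
next
  show "eventually (\<lambda>t. 0 \<le> \<eta> * t) (at_right 0)"
    using eventually_at_right_less by (rule eventually_mono) (use \<eta> in simp)
qed

text \<open>A linearized feasible descent direction d would decrease f by a multiple of t along
  xb + t d, while by the exact penalty estimate it can decrease by o(t) at most.\<close>

lemma first_order_condition:
  assumes dA: "\<And>i. i \<in> Act \<Longrightarrow> grad (\<phi> i) xb \<bullet> d \<le> 0"
    and dE: "\<And>i. i \<in> Eq \<Longrightarrow> grad (\<phi> i) xb \<bullet> d = 0"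
  shows "grad f xb \<bullet> d \<ge> 0"
proof (rule ccontr)
  define a where "a = - (grad f xb \<bullet> d)"
  assume "\<not> ?thesis"
  then have a: "a > 0" by (simp add: a_def)
  obtain \<rho> C where \<rho>: "\<rho> > 0" and pen: "\<And>x. norm (x - xb) < \<rho> \<Longrightarrow>
      f x \<ge> f xb + \<sigma> / 2 * (norm (x - xb))\<^sup>2 - C * violation x"
    using exact_penalty by blast
  define K where "K = \<bar>C\<bar> * real m + 1"
  define \<eta> where "\<eta> = a / (4 * K)"
  have K: "K \<ge> 1" by (simp add: K_def)
  have \<eta>: "\<eta> > 0" "K * \<eta> = a / 4" using a K by (auto simp: \<eta>_def)
  have "eventually (\<lambda>t. \<bar>f (xb + t *\<^sub>R d) - f xb - t * (grad f xb \<bullet> d)\<bar> \<le> \<eta> * t) (at_right 0)"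
    using eventually_linearization_along_ray[OF f_deriv[OF xb_in_ball] \<eta>(1), of d] by simp
  moreover have "eventually (\<lambda>t. norm (xb + t *\<^sub>R d - xb) < \<rho>) (at_right 0)"
    using tendsto_arc[of xb d 0] \<rho> by (intro eventually_at_right_0_norm_less) simp_all
  moreover note violation_along_direction[OF dA dE \<eta>(1)]
  ultimately obtain t where t: "t > 0" "violation (xb + t *\<^sub>R d) \<le> real m * (\<eta> * t)"
    "\<bar>f (xb + t *\<^sub>R d) - f xb - t * (grad f xb \<bullet> d)\<bar> \<le> \<eta> * t" "norm (xb + t *\<^sub>R d - xb) < \<rho>"
    by (auto elim: eventually_at_right_0_witness[OF eventually_conj[OF _ eventually_conj]])
  have "C * violation (xb + t *\<^sub>R d) \<le> \<bar>C\<bar> * violation (xb + t *\<^sub>R d)"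
    using violation_nonneg by (intro mult_right_mono) auto
  also have "\<dots> \<le> \<bar>C\<bar> * (real m * (\<eta> * t))" using t(2) by (intro mult_left_mono) auto
  also have "\<dots> = K * \<eta> * t - \<eta> * t" by (simp add: K_def algebra_simps)
  finally have "C * violation (xb + t *\<^sub>R d) \<le> K * \<eta> * t - \<eta> * t" .
  moreover have "0 \<le> \<sigma> / 2 * (norm (xb + t *\<^sub>R d - xb))\<^sup>2" using sigma_nonneg by simp
  moreover have "f (xb + t *\<^sub>R d) - f xb + a * t \<le> \<eta> * t"
    using t(3) by (simp add: a_def abs_le_iff mult.commute)
  moreover have "K * \<eta> * t = a / 4 * t" using \<eta>(2) by simp
  ultimately have "a * t \<le> a / 4 * t" using pen[OF t(4)] by linarith
  then show False using a t(1) by (simp add: mult_le_cancel_right)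
qed

section \<open>Lagrange multipliers\<close>

lemma multiplier_from_coefficients:
  assumes nonneg: "\<And>i. i \<in> Act \<Longrightarrow> c i \<ge> 0"
    and stat: "grad f xb + (\<Sum>i\<in>Act \<union> Eq. c i *\<^sub>R grad (\<phi> i) xb) = 0"
  shows "(\<lambda>i. if i \<in> Act \<union> Eq then c i else 0) \<in> lagrange_multipliers s m f \<phi> xb"
    (is "?y \<in> _")
proof -
  have "(\<Sum>i=1..m. ?y i *\<^sub>R grad (\<phi> i) xb) = (\<Sum>i\<in>Act \<union> Eq. c i *\<^sub>R grad (\<phi> i) xb)"
    by (rule sum.mono_neutral_cong_right) (use Act_Eq_subset in auto)
  moreover have "(\<Sum>i=1..m. ?y i * \<phi> i xb) = 0"
    by (rule sum.neutral) (auto simp: feasible_eq active_set_def)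
  moreover have "0 \<le> ?y i" if "i \<in> {1..s}" for i
    using nonneg that by (auto simp: active_set_def)
  ultimately show ?thesis
    using stat Act_Eq_subset unfolding lagrange_multipliers_def by auto
qed

lemma multipliers_nonempty: "lagrange_multipliers s m f \<phi> xb \<noteq> {}"
proof -
  let ?g = "\<lambda>j. grad (\<phi> j) xb"
  have "- grad f xb \<in> mixed_cone (Act \<union> Eq) Eq ?g"
  proof (rule ccontr)
    assume "- grad f xb \<notin> mixed_cone (Act \<union> Eq) Eq ?g"
    from farkas[OF _ _ this] obtain d where d: "d \<bullet> - grad f xb < 0"
        "\<forall>j\<in>Act \<union> Eq. d \<bullet> ?g j \<ge> 0" "\<forall>j\<in>Eq. d \<bullet> ?g j = 0"
      using finite_Act by auto
    have "grad f xb \<bullet> - d \<ge> 0"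
      using d(2,3) by (intro first_order_condition) (auto simp: inner_commute)
    then show False using d(1) by (simp add: inner_commute)
  qed
  moreover have "(Act \<union> Eq) - Eq = Act" using Act_Eq_disjoint by auto
  ultimately obtain c where c: "\<forall>j\<in>Act. c j \<ge> 0" "- grad f xb = (\<Sum>j\<in>Act \<union> Eq. c j *\<^sub>R ?g j)"
    unfolding mixed_cone_def by auto
  have "grad f xb + (\<Sum>j\<in>Act \<union> Eq. c j *\<^sub>R ?g j) = 0"
    using c(2) by (simp add: neg_eq_iff_add_eq_0)
  with c(1) have "(\<lambda>i. if i \<in> Act \<union> Eq then c i else 0) \<in> lagrange_multipliers s m f \<phi> xb"
    by (intro multiplier_from_coefficients) auto
  then show ?thesis by blast
qed

lemma multiplier_complementary_slackness:
  assumes y: "y \<in> lagrange_multipliers s m f \<phi> xb" and i: "i \<in> {1..s}"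
  shows "y i * \<phi> i xb = 0"
proof -
  have nonneg: "0 \<le> - (y j * \<phi> j xb)" if "j \<in> {1..m}" for j
  proof (cases "j \<le> s")
    case True
    then show ?thesis using y that feasible_ineq
      by (auto simp: lagrange_multipliers_def mult_nonneg_nonpos)
  qed (use that feasible_eq in auto)
  have "(\<Sum>j=1..m. - (y j * \<phi> j xb)) = 0"
    using y unfolding lagrange_multipliers_def by (auto simp: sum_negf)
  then have "\<forall>j\<in>{1..m}. y j * \<phi> j xb = 0"
    using sum_nonneg_eq_0_iff[of "{1..m}" "\<lambda>j. - (y j * \<phi> j xb)"] nonneg by simp
  then show ?thesis using i s_le_m by auto
qed

lemma multiplier_zero_off_active:
  assumes y: "y \<in> lagrange_multipliers s m f \<phi> xb" and i: "i \<notin> Act \<union> Eq"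
  shows "y i = 0"
proof (cases "i \<in> {1..m}")
  case True
  then have "i \<in> {1..s}" "\<phi> i xb \<noteq> 0" using i by (auto simp: active_set_def)
  then show ?thesis using multiplier_complementary_slackness[OF y] by auto
qed (use y in \<open>auto simp: lagrange_multipliers_def\<close>)

lemma multiplier_stationary:
  assumes y: "y \<in> lagrange_multipliers s m f \<phi> xb"
  shows "grad f xb + (\<Sum>i\<in>Act \<union> Eq. y i *\<^sub>R grad (\<phi> i) xb) = 0"
proof -
  have "(\<Sum>i=1..m. y i *\<^sub>R grad (\<phi> i) xb) = (\<Sum>i\<in>Act \<union> Eq. y i *\<^sub>R grad (\<phi> i) xb)"
    by (rule sum.mono_neutral_cong_right) (use Act_Eq_subset multiplier_zero_off_active[OF y] in auto)
  then show ?thesis using y unfolding lagrange_multipliers_def by auto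
qed

lemma LICQ_multiplier_unique:
  assumes L: "LICQ s m \<phi> xb"
    and y: "y \<in> lagrange_multipliers s m f \<phi> xb" and y': "y' \<in> lagrange_multipliers s m f \<phi> xb"
  shows "y = y'"
proof
  fix i
  have "(\<Sum>i\<in>Act \<union> Eq. (y i - y' i) *\<^sub>R grad (\<phi> i) xb) = 0"
    using multiplier_stationary[OF y] multiplier_stationary[OF y']
    by (simp add: scaleR_diff_left sum_subtractf) (metis add_left_cancel)
  then have "\<forall>i\<in>Act \<union> Eq. y i - y' i = 0"
    using L[unfolded LICQ_def Let_def, rule_format, of "\<lambda>i. y i - y' i"] by blast
  then show "y i = y' i"
    using multiplier_zero_off_active[OF y] multiplier_zero_off_active[OF y'] by (cases "i \<in> Act \<union> Eq") auto
qed

lemma LICQ_unique_multiplier: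
  assumes "LICQ s m \<phi> xb"
  shows "\<exists>yb. lagrange_multipliers s m f \<phi> xb = {yb}"
proof -
  obtain y where "y \<in> lagrange_multipliers s m f \<phi> xb" using multipliers_nonempty by blast
  then have "lagrange_multipliers s m f \<phi> xb = {y}" using LICQ_multiplier_unique[OF assms] by blast
  then show ?thesis by blast
qed

text \<open>If yb is the only multiplier, then yb + \<theta> c would be another one for small \<theta> > 0.\<close>

lemma unique_multiplier_independence:
  assumes yb: "lagrange_multipliers s m f \<phi> xb = {yb}"
    and dep: "(\<Sum>i\<in>Act \<union> Eq. c i *\<^sub>R grad (\<phi> i) xb) = 0"
    and sign: "\<And>i. i \<in> Act \<Longrightarrow> yb i \<le> 0 \<Longrightarrow> c i \<ge> 0"
    and i: "i \<in> Act \<union> Eq"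
  shows "c i = 0"
proof -
  have ybL: "yb \<in> lagrange_multipliers s m f \<phi> xb" using yb by simp
  have yb_nonneg: "yb j \<ge> 0" if "j \<in> Act" for j
    using ybL that Act_subset unfolding lagrange_multipliers_def by auto
  have "eventually (\<lambda>\<theta>. yb j + \<theta> * c j > 0) (at_right 0)" if "yb j > 0" for j
  proof -
    have "((\<lambda>\<theta>. yb j + \<theta> * c j) \<longlongrightarrow> yb j + 0 * c j) (at_right 0)" by (intro tendsto_intros)
    then show ?thesis using that by (intro order_tendstoD) auto
  qed
  then have "eventually (\<lambda>\<theta>. \<forall>j\<in>Act. yb j > 0 \<longrightarrow> yb j + \<theta> * c j > 0) (at_right 0)"
    using finite_Act by (intro eventually_ball_finite) (auto elim: eventually_mono)
  then obtain \<theta> where \<theta>: "\<theta> > 0" "\<And>j. j \<in> Act \<Longrightarrow> yb j > 0 \<Longrightarrow> yb j + \<theta> * c j > 0"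
    by (rule eventually_at_right_0_witness) blast
  have "(\<lambda>j. if j \<in> Act \<union> Eq then yb j + \<theta> * c j else 0) \<in> lagrange_multipliers s m f \<phi> xb"
  proof (rule multiplier_from_coefficients)
    show "0 \<le> yb j + \<theta> * c j" if "j \<in> Act" for j
    proof (cases "yb j > 0")
      case True
      then show ?thesis using \<theta>(2)[OF that] by simp
    next
      case False
      then show ?thesis using sign[OF that] yb_nonneg[OF that] \<theta>(1) by simp
    qed
    have "grad f xb + (\<Sum>j\<in>Act \<union> Eq. (yb j + \<theta> * c j) *\<^sub>R grad (\<phi> j) xb)
        = (grad f xb + (\<Sum>j\<in>Act \<union> Eq. yb j *\<^sub>R grad (\<phi> j) xb))
          + \<theta> *\<^sub>R (\<Sum>j\<in>Act \<union> Eq. c j *\<^sub>R grad (\<phi> j) xb)"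
      by (simp add: scaleR_add_left sum.distrib scaleR_sum_right)
    then show "grad f xb + (\<Sum>j\<in>Act \<union> Eq. (yb j + \<theta> * c j) *\<^sub>R grad (\<phi> j) xb) = 0"
      using multiplier_stationary[OF ybL] dep by simp
  qed
  then have "yb i + \<theta> * c i = yb i" using yb i by (auto dest: fun_cong[of _ _ i])
  then show ?thesis using \<theta>(1) by simp
qed

text \<open>Farkas' lemma in \<open>'a \<times> real\<close>: the only obstruction to solving the system would be a
  nontrivial nonnegative dependence of the active gradients, excluded by uniqueness of yb.\<close>

lemma unique_multiplier_linear_system:
  assumes yb: "lagrange_multipliers s m f \<phi> xb = {yb}"
  shows "\<exists>u. (\<forall>i\<in>Eq \<union> {i\<in>Act. yb i > 0}. grad (\<phi> i) xb \<bullet> u = b i)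
           \<and> (\<forall>i\<in>Act. grad (\<phi> i) xb \<bullet> u \<le> b i)"
proof -
  define J where "J = insert 0 (Act \<union> Eq)"
  define E where "E = Eq \<union> {i\<in>Act. yb i > 0}"
  define g where "g j = (if j = 0 then (0::'a, 1::real) else (grad (\<phi> j) xb, b j))" for j
  have n0: "0 \<notin> Act \<union> Eq" by (auto simp: active_set_def)
  have finJ: "finite J" using finite_Act by (simp add: J_def)
  have EJ: "E \<subseteq> J" by (auto simp: E_def J_def)
  have "(0, -1) \<notin> mixed_cone J E g"
  proof
    assume "(0, -1) \<in> mixed_cone J E g"
    then obtain c where c: "\<forall>j\<in>J-E. c j \<ge> 0" "(0::'a, -1::real) = (\<Sum>j\<in>J. c j *\<^sub>R g j)"
      unfolding mixed_cone_def by blast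
    have split: "(\<Sum>j\<in>J. c j *\<^sub>R g j) = c 0 *\<^sub>R g 0 + (\<Sum>j\<in>Act \<union> Eq. c j *\<^sub>R g j)"
      unfolding J_def using finite_Act n0 by (simp add: sum.insert)
    have "(\<Sum>j\<in>Act \<union> Eq. c j *\<^sub>R grad (\<phi> j) xb) = fst (\<Sum>j\<in>J. c j *\<^sub>R g j)"
      unfolding split using n0 by (auto simp: fst_sum g_def intro!: sum.cong)
    then have "(\<Sum>j\<in>Act \<union> Eq. c j *\<^sub>R grad (\<phi> j) xb) = 0" using c(2) by (metis fst_conv)
    then have "c j = 0" if "j \<in> Act \<union> Eq" for j
      using that c(1) by (intro unique_multiplier_independence[OF yb])
        (auto simp: J_def E_def active_set_def)
    then have "(0::'a, -1::real) = c 0 *\<^sub>R g 0" using c(2) split by simp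
    moreover have "c 0 \<ge> 0" using c(1) by (auto simp: J_def E_def active_set_def)
    ultimately show False by (simp add: g_def)
  qed
  from farkas[OF finJ EJ this] obtain p where p: "p \<bullet> (0::'a, -1::real) < 0"
      "\<forall>j\<in>J. p \<bullet> g j \<ge> 0" "\<forall>j\<in>E. p \<bullet> g j = 0"
    by blast
  obtain d \<delta> where pd: "p = (d, \<delta>)" by (cases p)
  have \<delta>: "\<delta> > 0" using p(1) pd by simp
  have gu: "grad (\<phi> j) xb \<bullet> ((- 1 / \<delta>) *\<^sub>R d) = - (d \<bullet> grad (\<phi> j) xb) / \<delta>" for j
    by (simp add: inner_commute)
  have "j \<in> J" "j \<noteq> 0" if "j \<in> Act" for j using that by (auto simp: J_def active_set_def)
  then have "grad (\<phi> j) xb \<bullet> ((- 1 / \<delta>) *\<^sub>R d) \<le> b j" if "j \<in> Act" for j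
    using p(2) pd \<delta> that unfolding gu by (force simp: g_def field_simps)
  moreover have "grad (\<phi> j) xb \<bullet> ((- 1 / \<delta>) *\<^sub>R d) = b j" if "j \<in> E" for j
  proof -
    have "j \<noteq> 0" using that by (auto simp: E_def active_set_def)
    then have "d \<bullet> grad (\<phi> j) xb + \<delta> * b j = 0" using p(3) that pd by (auto simp: g_def)
    then show ?thesis unfolding gu using \<delta> by (simp add: field_simps)
  qed
  ultimately show ?thesis unfolding E_def by blast
qed

end

section \<open>Second-order conditions\<close>

lemma eventually_norm_arc_sq_ge:
  fixes v u :: "'a::real_inner"
  assumes \<sigma>: "\<sigma> \<ge> 0" and \<eta>: "\<eta> > 0"
  shows "eventually (\<lambda>t. \<sigma> / 2 * t\<^sup>2 * (norm v)\<^sup>2 - \<eta> * t\<^sup>2 \<le> \<sigma> / 2 * (norm (t *\<^sub>R v + t\<^sup>2 *\<^sub>R u))\<^sup>2)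
    (at_right 0)"
proof -
  have "((\<lambda>t. t * (\<sigma> * \<bar>v \<bullet> u\<bar>)) \<longlongrightarrow> 0 * (\<sigma> * \<bar>v \<bullet> u\<bar>)) (at_right 0)"
    by (intro tendsto_intros)
  then have "eventually (\<lambda>t. t * (\<sigma> * \<bar>v \<bullet> u\<bar>) < \<eta>) (at_right 0)"
    using \<eta> by (intro order_tendstoD(2)) auto
  then show ?thesis
  proof (rule eventually_mono[OF eventually_conj[OF _ eventually_at_right_less]])
    fix t :: real assume t: "t * (\<sigma> * \<bar>v \<bullet> u\<bar>) < \<eta> \<and> 0 < t"
    have "(norm (t *\<^sub>R v + t\<^sup>2 *\<^sub>R u))\<^sup>2 = t\<^sup>2 * (norm v)\<^sup>2 + 2 * (t * t\<^sup>2) * (v \<bullet> u) + t\<^sup>2 * t\<^sup>2 * (norm u)\<^sup>2"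
      unfolding power2_norm_eq_inner
      by (simp add: inner_add_left inner_add_right inner_commute[of u v] power2_eq_square
          algebra_simps)
    moreover have "2 * (t * t\<^sup>2) * (- \<bar>v \<bullet> u\<bar>) \<le> 2 * (t * t\<^sup>2) * (v \<bullet> u)"
      using t by (intro mult_left_mono) auto
    moreover have "0 \<le> t\<^sup>2 * t\<^sup>2 * (norm u)\<^sup>2" by simp
    ultimately have "t\<^sup>2 * (norm v)\<^sup>2 - 2 * (t * t\<^sup>2) * \<bar>v \<bullet> u\<bar> \<le> (norm (t *\<^sub>R v + t\<^sup>2 *\<^sub>R u))\<^sup>2"
      by linarith
    then have "\<sigma> / 2 * (t\<^sup>2 * (norm v)\<^sup>2 - 2 * (t * t\<^sup>2) * \<bar>v \<bullet> u\<bar>)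
        \<le> \<sigma> / 2 * (norm (t *\<^sub>R v + t\<^sup>2 *\<^sub>R u))\<^sup>2"
      using \<sigma> by (intro mult_left_mono) auto
    moreover have "t\<^sup>2 * (t * (\<sigma> * \<bar>v \<bullet> u\<bar>)) \<le> t\<^sup>2 * \<eta>"
      using t by (intro mult_left_mono) auto
    ultimately show "\<sigma> / 2 * t\<^sup>2 * (norm v)\<^sup>2 - \<eta> * t\<^sup>2 \<le> \<sigma> / 2 * (norm (t *\<^sub>R v + t\<^sup>2 *\<^sub>R u))\<^sup>2"
      by (simp add: power2_eq_square algebra_simps)
  qed
qed

locale nlp_critical_direction = nlp_local_growth +
  fixes yb :: "nat \<Rightarrow> real" and w :: 'a
  assumes yb_unique: "lagrange_multipliers s m f \<phi> xb = {yb}"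
    and w_critical: "w \<in> critical_cone s m \<phi> xb yb"
begin

abbreviation "Bind \<equiv> Eq \<union> {i\<in>Act. yb i > 0}"

definition lagrangian :: "'a \<Rightarrow> real" where
  "lagrangian x = f x + (\<Sum>i\<in>Act \<union> Eq. yb i * \<phi> i x)"

definition lagrangian_grad :: "'a \<Rightarrow> 'a" where
  "lagrangian_grad x = grad f x + (\<Sum>i\<in>Act \<union> Eq. yb i *\<^sub>R grad (\<phi> i) x)"

definition multiplier_curvature :: real where
  "multiplier_curvature = (\<Sum>i\<in>Act \<union> Eq. yb i * (D i w \<bullet> w))"

lemma yb_multiplier: "yb \<in> lagrange_multipliers s m f \<phi> xb"
  using yb_unique by simp

lemma w_active: "i \<in> Act \<Longrightarrow> grad (\<phi> i) xb \<bullet> w \<ge> 0"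
  and w_binding: "i \<in> Bind \<Longrightarrow> grad (\<phi> i) xb \<bullet> w = 0"
  using w_critical unfolding critical_cone_def Let_def by auto

lemma yb_nonzero_binding:
  assumes "i \<in> Act \<union> Eq" "yb i \<noteq> 0"
  shows "i \<in> Bind"
proof -
  have "yb i \<ge> 0" if "i \<in> Act"
    using that yb_multiplier Act_subset unfolding lagrange_multipliers_def by auto
  then show ?thesis using assms by force
qed

lemma lagrangian_xb: "lagrangian xb = f xb"
proof -
  have "(\<Sum>i\<in>Act \<union> Eq. yb i * \<phi> i xb) = 0"
    by (rule sum.neutral) (auto simp: feasible_eq active_set_def)
  then show ?thesis by (simp add: lagrangian_def)
qed

lemma lagrangian_grad_xb: "lagrangian_grad xb = 0"
  unfolding lagrangian_grad_def using multiplier_stationary[OF yb_multiplier] .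

lemma lagrangian_deriv:
  assumes "x \<in> ball xb r"
  shows "(lagrangian has_derivative (\<lambda>h. lagrangian_grad x \<bullet> h)) (at x)"
proof -
  have "((\<lambda>x. f x + (\<Sum>i\<in>Act \<union> Eq. yb i * \<phi> i x)) has_derivative
      (\<lambda>h. grad f x \<bullet> h + (\<Sum>i\<in>Act \<union> Eq. yb i * (grad (\<phi> i) x \<bullet> h)))) (at x)"
    using Act_Eq_subset assms
    by (intro has_derivative_add f_deriv has_derivative_sum has_derivative_mult_right phi_deriv) auto
  then show ?thesis unfolding lagrangian_def
    by (rule has_derivative_eq_rhs)
       (simp add: lagrangian_grad_def fun_eq_iff inner_add_left inner_sum_left)
qed

lemma hess_quad_multiplier_term:
  "hess_quad (\<lambda>x. \<Sum>i=1..m. yb i * \<phi> i x) xb w = multiplier_curvature"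
proof -
  define \<psi> where "\<psi> x = (\<Sum>i=1..m. yb i * \<phi> i x)" for x
  have d\<psi>: "(\<psi> has_derivative (\<lambda>h. (\<Sum>i=1..m. yb i *\<^sub>R grad (\<phi> i) x) \<bullet> h)) (at x)"
    if x: "x \<in> ball xb r" for x
  proof -
    have "(\<psi> has_derivative (\<lambda>h. \<Sum>i=1..m. yb i * (grad (\<phi> i) x \<bullet> h))) (at x)"
      unfolding \<psi>_def by (intro has_derivative_sum has_derivative_mult_right phi_deriv x) auto
    then show ?thesis by (rule has_derivative_eq_rhs) (simp add: fun_eq_iff inner_sum_left)
  qed
  have fd: "frechet_derivative \<psi> (at x) w = (\<Sum>i=1..m. yb i *\<^sub>R grad (\<phi> i) x) \<bullet> w"
    if "x \<in> ball xb r" for x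
    using frechet_derivative_at[OF d\<psi>[OF that]] by metis
  have "((\<lambda>u. (\<Sum>i=1..m. yb i *\<^sub>R grad (\<phi> i) u) \<bullet> w) has_derivative
       (\<lambda>h. (\<Sum>i=1..m. yb i *\<^sub>R D i h) \<bullet> w)) (at xb)"
    by (intro has_derivative_inner_left has_derivative_sum has_derivative_scaleR_right
        grad_phi_deriv) auto
  then have "((\<lambda>u. frechet_derivative \<psi> (at u) w) has_derivative
       (\<lambda>h. (\<Sum>i=1..m. yb i *\<^sub>R D i h) \<bullet> w)) (at xb)"
    by (rule has_derivative_transform_within_open[OF _ open_ball xb_in_ball]) (simp add: fd)
  then have "hess_quad \<psi> xb w = (\<Sum>i=1..m. yb i *\<^sub>R D i w) \<bullet> w"
    unfolding hess_quad_def by (simp add: frechet_derivative_at[symmetric])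
  also have "\<dots> = (\<Sum>i=1..m. yb i * (D i w \<bullet> w))" by (simp add: inner_sum_left)
  also have "\<dots> = multiplier_curvature" unfolding multiplier_curvature_def
    by (rule sum.mono_neutral_cong_right)
       (use Act_Eq_subset multiplier_zero_off_active[OF yb_multiplier] in auto)
  finally show ?thesis unfolding \<psi>_def .
qed

lemma lagrangian_lipschitz_near_xb:
  assumes e: "e > 0"
  obtains \<delta> where "\<delta> > 0" "\<And>x y. norm (x - xb) < \<delta> \<Longrightarrow> norm (y - xb) < \<delta> \<Longrightarrow>
    \<bar>lagrangian x - lagrangian y\<bar> \<le> e * norm (x - y)"
proof -
  have "isCont (grad f) xb"
    using lipschitz_on_continuous_within[OF grad_f_lipschitz xb_in_ball]
    by (simp add: continuous_within_open[OF xb_in_ball open_ball])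
  moreover have "isCont (grad (\<phi> i)) xb" if "i \<in> Act \<union> Eq" for i
    using that Act_Eq_subset has_derivative_continuous[OF grad_phi_deriv] by blast
  ultimately have "isCont lagrangian_grad xb"
    unfolding lagrangian_grad_def[abs_def] by (intro continuous_intros) auto
  from continuous_at_eps_delta[THEN iffD1, OF this, rule_format, OF e]
  obtain \<delta> where \<delta>: "\<delta> > 0" "\<And>x. dist x xb < \<delta> \<Longrightarrow> dist (lagrangian_grad x) 0 < e"
    unfolding lagrangian_grad_xb by blast
  let ?B = "ball xb (min \<delta> r)"
  have "\<bar>lagrangian x - lagrangian y\<bar> \<le> e * norm (x - y)" if "x \<in> ?B" "y \<in> ?B" for x y
    by (rule inner_derivative_lipschitz[OF convex_ball _ _ that])
       (use \<delta> in \<open>auto intro!: lagrangian_deriv less_imp_le simp: dist_commute\<close>)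
  then show ?thesis using \<delta> r_pos by (intro that[of "min \<delta> r"]) (auto simp: dist_norm norm_minus_commute)
qed

text \<open>With this correction the binding constraints vanish, and the other active ones are
  nonpositive, up to \<open>o(t\<^sup>2)\<close> along the arc below.\<close>

definition arc_correction :: 'a where
  "arc_correction = (SOME u. (\<forall>i\<in>Bind. grad (\<phi> i) xb \<bullet> u = - (D i w \<bullet> w) / 2)
                            \<and> (\<forall>i\<in>Act. grad (\<phi> i) xb \<bullet> u \<le> - (D i w \<bullet> w) / 2))"

lemma arc_correction:
  "i \<in> Bind \<Longrightarrow> grad (\<phi> i) xb \<bullet> arc_correction = - (D i w \<bullet> w) / 2"
  "i \<in> Act \<Longrightarrow> grad (\<phi> i) xb \<bullet> arc_correction \<le> - (D i w \<bullet> w) / 2"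
  using someI_ex[OF unique_multiplier_linear_system[OF yb_unique, of "\<lambda>i. - (D i w \<bullet> w) / 2"]]
  unfolding arc_correction_def by auto

definition second_order_arc :: "real \<Rightarrow> 'a" where
  "second_order_arc t = xb + t *\<^sub>R (- w) + t\<^sup>2 *\<^sub>R arc_correction"

lemma arc_expansion:
  assumes i: "i \<in> Act \<union> Eq" and \<eta>: "\<eta> > 0"
  shows "eventually (\<lambda>t. \<bar>\<phi> i (second_order_arc t) - \<phi> i xb + t * (grad (\<phi> i) xb \<bullet> w)
      - t\<^sup>2 * (grad (\<phi> i) xb \<bullet> arc_correction + D i w \<bullet> w / 2)\<bar> \<le> \<eta> * t\<^sup>2) (at_right 0)"
proof -
  have i1: "i \<in> {1..m}" using i Act_Eq_subset by auto
  have "D i (- w) \<bullet> (- w) = D i w \<bullet> w"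
    using has_derivative_linear[OF grad_phi_deriv[OF i1]] by (simp add: linear_neg)
  then show ?thesis
    using second_order_expansion_arc[OF r_pos phi_deriv[OF i1] grad_phi_deriv[OF i1] \<eta>,
        of "- w" arc_correction]
    unfolding second_order_arc_def by simp
qed

lemma arc_binding:
  assumes i: "i \<in> Bind" and \<eta>: "\<eta> > 0"
  shows "eventually (\<lambda>t. \<bar>\<phi> i (second_order_arc t)\<bar> \<le> \<eta> * t\<^sup>2) (at_right 0)"
proof -
  have "\<phi> i xb = 0" using i feasible_eq by (auto simp: active_set_def)
  then show ?thesis
    using arc_expansion[OF _ \<eta>, of i] i by (auto simp: w_binding arc_correction(1))
qed

lemma arc_active:
  assumes i: "i \<in> Act" and \<eta>: "\<eta> > 0"
  shows "eventually (\<lambda>t. \<phi> i (second_order_arc t) \<le> \<eta> * t\<^sup>2) (at_right 0)"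
proof (rule eventually_mono[OF eventually_conj[OF arc_expansion[OF _ \<eta>] eventually_at_right_less]])
  show "i \<in> Act \<union> Eq" using i by simp
  fix t :: real
  assume h: "\<bar>\<phi> i (second_order_arc t) - \<phi> i xb + t * (grad (\<phi> i) xb \<bullet> w)
      - t\<^sup>2 * (grad (\<phi> i) xb \<bullet> arc_correction + D i w \<bullet> w / 2)\<bar> \<le> \<eta> * t\<^sup>2 \<and> 0 < t"
  have "t * (grad (\<phi> i) xb \<bullet> w) \<ge> 0" using h w_active[OF i] by simp
  moreover have "t\<^sup>2 * (grad (\<phi> i) xb \<bullet> arc_correction + D i w \<bullet> w / 2) \<le> 0"
    using arc_correction(2)[OF i] by (simp add: mult_nonneg_nonpos)
  moreover have "\<phi> i xb = 0" using i by (simp add: active_set_def)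
  ultimately show "\<phi> i (second_order_arc t) \<le> \<eta> * t\<^sup>2" using h by (simp add: abs_le_iff)
qed

lemma arc_violation:
  assumes \<eta>: "\<eta> > 0"
  shows "eventually (\<lambda>t. violation (second_order_arc t) \<le> real m * (\<eta> * t\<^sup>2)) (at_right 0)"
proof (rule violation_eventually_le)
  show "(second_order_arc \<longlongrightarrow> xb) (at_right 0)" unfolding second_order_arc_def[abs_def] by (rule tendsto_arc)
  show "eventually (\<lambda>t. 0 \<le> \<eta> * t\<^sup>2) (at_right 0)" using \<eta> by simp
qed (use arc_active arc_binding \<eta> in auto)

lemma arc_multiplier_term:
  assumes \<eta>: "\<eta> > 0"
  shows "eventually (\<lambda>t. (\<Sum>i\<in>Act \<union> Eq. yb i * \<phi> i (second_order_arc t)) \<ge> - ((\<Sum>i\<in>Act \<union> Eq. \<bar>yb i\<bar>) * (\<eta> * t\<^sup>2)))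
    (at_right 0)"
proof -
  have "eventually (\<lambda>t. \<bar>yb i * \<phi> i (second_order_arc t)\<bar> \<le> \<bar>yb i\<bar> * (\<eta> * t\<^sup>2)) (at_right 0)"
    if i: "i \<in> Act \<union> Eq" for i
  proof (cases "yb i = 0")
    case False
    show ?thesis using arc_binding[OF yb_nonzero_binding[OF i False] \<eta>]
      by (rule eventually_mono) (simp add: abs_mult mult_left_mono)
  qed simp
  then have "eventually (\<lambda>t. \<forall>i\<in>Act \<union> Eq. \<bar>yb i * \<phi> i (second_order_arc t)\<bar> \<le> \<bar>yb i\<bar> * (\<eta> * t\<^sup>2)) (at_right 0)"
    using finite_Act by (intro eventually_ball_finite) auto
  then show ?thesis
  proof (rule eventually_mono)
    fix t assume h: "\<forall>i\<in>Act \<union> Eq. \<bar>yb i * \<phi> i (second_order_arc t)\<bar> \<le> \<bar>yb i\<bar> * (\<eta> * t\<^sup>2)"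
    have "(\<Sum>i\<in>Act \<union> Eq. - (\<bar>yb i\<bar> * (\<eta> * t\<^sup>2))) \<le> (\<Sum>i\<in>Act \<union> Eq. yb i * \<phi> i (second_order_arc t))"
      by (rule sum_mono) (metis h abs_le_D2 minus_le_iff)
    then show "(\<Sum>i\<in>Act \<union> Eq. yb i * \<phi> i (second_order_arc t)) \<ge> - ((\<Sum>i\<in>Act \<union> Eq. \<bar>yb i\<bar>) * (\<eta> * t\<^sup>2))"
      by (simp add: sum_negf sum_distrib_right)
  qed
qed

lemma lagrangian_arc_lower_bound:
  assumes \<eta>: "\<eta> > 0"
  shows "eventually (\<lambda>t. lagrangian (second_order_arc t) \<ge> f xb + \<sigma> / 2 * t\<^sup>2 * (norm w)\<^sup>2 - \<eta> * t\<^sup>2) (at_right 0)"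
proof -
  obtain \<rho> C where \<rho>: "\<rho> > 0" and pen: "\<And>x. norm (x - xb) < \<rho> \<Longrightarrow>
      f x \<ge> f xb + \<sigma> / 2 * (norm (x - xb))\<^sup>2 - C * violation x"
    using exact_penalty by blast
  define Y where "Y = (\<Sum>i\<in>Act \<union> Eq. \<bar>yb i\<bar>)"
  define K where "K = 1 + \<bar>C\<bar> * real m + Y"
  have K: "K \<ge> 1" unfolding K_def Y_def by (simp add: sum_nonneg)
  define \<eta>1 where "\<eta>1 = \<eta> / K"
  have \<eta>1: "\<eta>1 > 0" "K * \<eta>1 = \<eta>" using \<eta> K by (auto simp: \<eta>1_def)
  have near: "eventually (\<lambda>t. norm (second_order_arc t - xb) < \<rho>) (at_right 0)"
    unfolding second_order_arc_def using tendsto_arc \<rho> by (rule eventually_at_right_0_norm_less)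
  have quad: "eventually (\<lambda>t. \<sigma> / 2 * t\<^sup>2 * (norm w)\<^sup>2 - \<eta>1 * t\<^sup>2 \<le> \<sigma> / 2 * (norm (second_order_arc t - xb))\<^sup>2)
      (at_right 0)"
    using eventually_norm_arc_sq_ge[OF sigma_nonneg \<eta>1(1), of "- w" arc_correction]
    by (simp add: second_order_arc_def)
  show ?thesis
  proof (rule eventually_mono[OF eventually_conj[OF near eventually_conj[OF quad
          eventually_conj[OF arc_violation[OF \<eta>1(1)] arc_multiplier_term[OF \<eta>1(1)]]]]])
    fix t assume h: "norm (second_order_arc t - xb) < \<rho> \<and>
        \<sigma> / 2 * t\<^sup>2 * (norm w)\<^sup>2 - \<eta>1 * t\<^sup>2 \<le> \<sigma> / 2 * (norm (second_order_arc t - xb))\<^sup>2 \<and>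
        violation (second_order_arc t) \<le> real m * (\<eta>1 * t\<^sup>2) \<and>
        - ((\<Sum>i\<in>Act \<union> Eq. \<bar>yb i\<bar>) * (\<eta>1 * t\<^sup>2)) \<le> (\<Sum>i\<in>Act \<union> Eq. yb i * \<phi> i (second_order_arc t))"
    have "C * violation (second_order_arc t) \<le> \<bar>C\<bar> * violation (second_order_arc t)"
      using violation_nonneg by (intro mult_right_mono) auto
    also have "\<dots> \<le> \<bar>C\<bar> * (real m * (\<eta>1 * t\<^sup>2))" using h by (intro mult_left_mono) auto
    finally have "C * violation (second_order_arc t) \<le> \<bar>C\<bar> * (real m * (\<eta>1 * t\<^sup>2))" .
    moreover have "\<eta> * t\<^sup>2 = \<eta>1 * t\<^sup>2 + \<bar>C\<bar> * (real m * (\<eta>1 * t\<^sup>2)) + Y * (\<eta>1 * t\<^sup>2)"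
      unfolding \<eta>1(2)[symmetric] K_def by (simp add: algebra_simps)
    ultimately show "lagrangian (second_order_arc t) \<ge> f xb + \<sigma> / 2 * t\<^sup>2 * (norm w)\<^sup>2 - \<eta> * t\<^sup>2"
      using pen[of "second_order_arc t"] h unfolding lagrangian_def Y_def by linarith
  qed
qed

lemma lagrangian_ray_lower_bound:
  assumes \<eta>: "\<eta> > 0"
  shows "eventually (\<lambda>t. lagrangian (xb + t *\<^sub>R (- w)) \<ge> f xb + \<sigma> / 2 * t\<^sup>2 * (norm w)\<^sup>2 - \<eta> * t\<^sup>2)
    (at_right 0)"
proof -
  define u where "u = arc_correction"
  define e where "e = \<eta> / (2 * (norm u + 1))"
  have e: "e > 0" using \<eta> by (simp add: e_def add_nonneg_pos)
  have "e * norm u = \<eta> / 2 * (norm u / (norm u + 1))" by (simp add: e_def)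
  also have "\<dots> \<le> \<eta> / 2 * 1"
    using \<eta> norm_ge_zero[of u] by (intro mult_left_mono) (auto simp: divide_le_eq add_nonneg_pos)
  finally have eu: "e * norm u \<le> \<eta> / 2" by simp
  obtain \<delta> where \<delta>: "\<delta> > 0" and lip: "\<And>x y. norm (x - xb) < \<delta> \<Longrightarrow> norm (y - xb) < \<delta> \<Longrightarrow>
      \<bar>lagrangian x - lagrangian y\<bar> \<le> e * norm (x - y)"
    using lagrangian_lipschitz_near_xb[OF e] by blast
  have near_arc: "eventually (\<lambda>t. norm (second_order_arc t - xb) < \<delta>) (at_right 0)"
    unfolding second_order_arc_def using tendsto_arc \<delta> by (rule eventually_at_right_0_norm_less)
  have "((\<lambda>t. xb + t *\<^sub>R (- w)) \<longlongrightarrow> xb) (at_right 0)" using tendsto_arc[of xb "- w" 0] by simp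
  from eventually_at_right_0_norm_less[OF this \<delta>]
  have near_ray: "eventually (\<lambda>t. norm (xb + t *\<^sub>R (- w) - xb) < \<delta>) (at_right 0)" .
  have \<eta>2: "\<eta> / 2 > 0" using \<eta> by simp
  show ?thesis
  proof (rule eventually_mono[OF eventually_conj[OF lagrangian_arc_lower_bound[OF \<eta>2]
        eventually_conj[OF near_arc near_ray]]])
    fix t assume h: "lagrangian (second_order_arc t) \<ge> f xb + \<sigma> / 2 * t\<^sup>2 * (norm w)\<^sup>2 - \<eta> / 2 * t\<^sup>2 \<and>
        norm (second_order_arc t - xb) < \<delta> \<and> norm (xb + t *\<^sub>R (- w) - xb) < \<delta>"
    have "\<bar>lagrangian (xb + t *\<^sub>R (- w)) - lagrangian (second_order_arc t)\<bar> \<le> e * norm (xb + t *\<^sub>R (- w) - second_order_arc t)"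
      using h by (intro lip) auto
    also have "\<dots> = t\<^sup>2 * (e * norm u)" by (simp add: second_order_arc_def u_def)
    also have "\<dots> \<le> t\<^sup>2 * (\<eta> / 2)" using eu by (intro mult_left_mono) auto
    finally have "lagrangian (second_order_arc t) - lagrangian (xb + t *\<^sub>R (- w)) \<le> t\<^sup>2 * (\<eta> / 2)"
      by (metis abs_le_D2 minus_diff_eq)
    moreover have "t\<^sup>2 * (\<eta> / 2) = \<eta> * t\<^sup>2 - \<eta> / 2 * t\<^sup>2" by simp
    ultimately show "lagrangian (xb + t *\<^sub>R (- w)) \<ge> f xb + \<sigma> / 2 * t\<^sup>2 * (norm w)\<^sup>2 - \<eta> * t\<^sup>2"
      using h by linarith
  qed
qed

lemma exists_small_lagrangian_slope:
  assumes \<epsilon>: "\<epsilon> > 0" and Q: "eventually Q (at_right 0)"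
  obtains t where "t > 0" "Q t"
    "lagrangian_grad (xb + t *\<^sub>R (- w)) \<bullet> w \<le> (\<epsilon> - \<sigma> * (norm w)\<^sup>2) * t"
proof (rule ccontr)
  assume no_t: "\<not> thesis"
  define x where "x t = xb + t *\<^sub>R (- w)" for t :: real
  have "(x \<longlongrightarrow> xb) (at_right 0)" unfolding x_def[abs_def] using tendsto_arc[of xb "- w" 0] by simp
  from eventually_at_right_0_norm_less[OF this r_pos]
  have "eventually (\<lambda>t. x t \<in> ball xb r) (at_right 0)"
    by (rule eventually_mono) (simp add: dist_norm norm_minus_commute)
  moreover have "\<epsilon> / 4 > 0" using \<epsilon> by simp
  note lagrangian_ray_lower_bound[OF this]
  ultimately have "eventually (\<lambda>t. Q t \<and> x t \<in> ball xb r \<and>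
      lagrangian (x t) \<ge> f xb + \<sigma> / 2 * t\<^sup>2 * (norm w)\<^sup>2 - \<epsilon> / 4 * t\<^sup>2) (at_right 0)"
    using Q unfolding x_def by eventually_elim auto
  then obtain \<tau> where \<tau>: "\<tau> > 0" and near: "\<And>t. 0 < t \<Longrightarrow> t < \<tau> \<Longrightarrow> Q t \<and> x t \<in> ball xb r \<and>
      lagrangian (x t) \<ge> f xb + \<sigma> / 2 * t\<^sup>2 * (norm w)\<^sup>2 - \<epsilon> / 4 * t\<^sup>2"
    unfolding eventually_at_right_field by auto
  define a where "a = \<sigma> * (norm w)\<^sup>2 - \<epsilon>"
  define k where "k t = lagrangian (x t) - a * t\<^sup>2 / 2" for t
  define t0 where "t0 = \<tau> / 2"
  have t0: "0 < t0" "t0 < \<tau>" using \<tau> by (auto simp: t0_def)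
  have dk: "(k has_real_derivative (lagrangian_grad (x t) \<bullet> (- w) - a * t)) (at t)"
    if "0 \<le> t" "t \<le> t0" for t
  proof -
    have ball: "x t \<in> ball xb r"
      using near[of t] that t0 xb_in_ball by (cases "t = 0") (auto simp: x_def)
    have line: "(x has_derivative (\<lambda>h. h *\<^sub>R (- w))) (at t)"
      unfolding x_def[abs_def] by (auto intro!: derivative_eq_intros)
    from diff_chain_at[OF line lagrangian_deriv[OF ball]]
    have "((\<lambda>t. lagrangian (x t)) has_real_derivative lagrangian_grad (x t) \<bullet> (- w)) (at t)"
      unfolding has_field_derivative_def o_def
      by (rule has_derivative_eq_rhs) (auto simp: fun_eq_iff)
    then show ?thesis unfolding k_def by (auto intro!: derivative_eq_intros)
  qed
  have "k t0 < k 0"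
  proof (rule DERIV_neg_imp_decreasing_open[OF t0(1)])
    fix t assume t: "0 < t" "t < t0"
    then have "\<not> lagrangian_grad (x t) \<bullet> w \<le> (\<epsilon> - \<sigma> * (norm w)\<^sup>2) * t"
      using no_t that near[of t] t0 unfolding x_def by auto
    then show "\<exists>l. (k has_real_derivative l) (at t) \<and> l < 0"
      using dk[of t] t by (intro exI[of _ "lagrangian_grad (x t) \<bullet> (- w) - a * t"])
        (auto simp: a_def algebra_simps)
  next
    show "continuous_on {0..t0} k"
      using dk by (intro continuous_at_imp_continuous_on ballI DERIV_isCont) auto
  qed
  moreover have "k 0 = f xb" by (simp add: k_def x_def lagrangian_xb)
  moreover have "k t0 \<ge> f xb + \<epsilon> / 4 * t0\<^sup>2"
    using near[OF t0] by (simp add: k_def a_def field_simps)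
  moreover have "\<epsilon> / 4 * t0\<^sup>2 > 0" using \<epsilon> t0 by simp
  ultimately show False by linarith
qed

lemma second_subdiff_ray_bound:
  assumes z: "z \<in> second_subdiff f xb w" and e: "e > 0"
  shows "eventually (\<lambda>t. - t * (z \<bullet> w) - w \<bullet> (grad f (xb + t *\<^sub>R (- w)) - grad f xb) \<le> e * t)
    (at_right 0)"
proof -
  define x where "x t = xb + t *\<^sub>R (- w)" for t :: real
  define p where "p t = (x t, grad f (x t))" for t
  define C where "C = (1 + Lf) * (norm w + 1)"
  have Lf: "Lf \<ge> 0" using grad_f_lipschitz by (simp add: lipschitz_on_def)
  have C: "C > 0" unfolding C_def using Lf by (simp add: add_nonneg_pos)
  have e': "e / C > 0" using e C by simp
  obtain \<delta> where \<delta>: "\<delta> > 0" and normal: "\<And>q. q \<in> graph_grad f \<Longrightarrow> dist q (xb, grad f xb) < \<delta> \<Longrightarrow>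
      (z, - w) \<bullet> (q - (xb, grad f xb)) \<le> e / C * norm (q - (xb, grad f xb))"
    using z e' unfolding second_subdiff_def regular_normal_cone_def by blast
  have dist_p: "norm (p t - (xb, grad f xb)) \<le> C * t" if t: "0 < t" "x t \<in> ball xb r" for t
  proof -
    have "norm (grad f (x t) - grad f xb) \<le> Lf * (t * norm w)"
      using lipschitz_onD[OF grad_f_lipschitz t(2) xb_in_ball] t(1) by (simp add: dist_norm x_def)
    then have "norm (p t - (xb, grad f xb)) \<le> t * norm w + Lf * (t * norm w)"
      using norm_Pair_le[of "x t - xb" "grad f (x t) - grad f xb"] t by (simp add: p_def x_def)
    also have "\<dots> \<le> C * t" using t Lf by (simp add: C_def algebra_simps)
    finally show ?thesis .
  qed
  have "(x \<longlongrightarrow> xb) (at_right 0)" unfolding x_def[abs_def] using tendsto_arc[of xb "- w" 0] by simp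
  from eventually_at_right_0_norm_less[OF this r_pos]
  have "eventually (\<lambda>t. x t \<in> ball xb r) (at_right 0)"
    by (rule eventually_mono) (simp add: dist_norm norm_minus_commute)
  moreover have "eventually (\<lambda>t. 0 < t \<and> t < \<delta> / C) (at_right (0::real))"
    using \<delta> C unfolding eventually_at_right_field by (intro exI[of _ "\<delta> / C"]) auto
  ultimately show ?thesis
  proof eventually_elim
    case (elim t)
    then have near: "norm (p t - (xb, grad f xb)) \<le> C * t" "C * t < \<delta>"
      using dist_p[of t] C by (auto simp: pos_less_divide_eq mult.commute)
    have "p t \<in> graph_grad f"
      using f_deriv elim unfolding p_def graph_grad_def by (blast intro: differentiableI)
    then have "(z, - w) \<bullet> (p t - (xb, grad f xb)) \<le> e / C * norm (p t - (xb, grad f xb))"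
      using near by (intro normal) (auto simp: dist_norm)
    also have "\<dots> \<le> e / C * (C * t)" using near e' by (intro mult_left_mono) auto
    also have "\<dots> = e * t" using C by simp
    finally show ?case by (simp add: p_def x_def inner_diff_right)
  qed
qed

definition multiplier_slope :: "'a \<Rightarrow> real" where
  "multiplier_slope y = (\<Sum>i\<in>Act \<union> Eq. yb i * (grad (\<phi> i) y \<bullet> w))"

lemma lagrangian_grad_inner_w: "lagrangian_grad y \<bullet> w = grad f y \<bullet> w + multiplier_slope y"
  unfolding lagrangian_grad_def multiplier_slope_def by (simp add: inner_add_left inner_sum_left)

lemma grad_phi_ray_expansion:
  assumes i: "i \<in> Act \<union> Eq" and \<eta>: "\<eta> > 0"
  shows "eventually (\<lambda>t. \<bar>(grad (\<phi> i) (xb + t *\<^sub>R (- w)) - grad (\<phi> i) xb) \<bullet> w + t * (D i w \<bullet> w)\<bar>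
      \<le> \<eta> * t) (at_right 0)"
proof -
  have i1: "i \<in> {1..m}" using i Act_Eq_subset by auto
  have Dneg: "D i (- w) = - D i w"
    using has_derivative_linear[OF grad_phi_deriv[OF i1]] by (simp add: linear_neg)
  have "\<eta> / (norm w + 1) > 0" using \<eta> by (simp add: add_nonneg_pos)
  from eventually_linearization_along_ray[OF grad_phi_deriv[OF i1] this, of "- w"]
  show ?thesis
  proof (rule eventually_mono)
    fix t :: real
    let ?v = "grad (\<phi> i) (xb + t *\<^sub>R (- w)) - grad (\<phi> i) xb + t *\<^sub>R D i w"
    assume "norm (grad (\<phi> i) (xb + t *\<^sub>R - w) - grad (\<phi> i) xb - t *\<^sub>R D i (- w))
        \<le> \<eta> / (norm w + 1) * t"
    then have v: "norm ?v \<le> \<eta> / (norm w + 1) * t" using Dneg by simp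
    have "\<bar>(grad (\<phi> i) (xb + t *\<^sub>R (- w)) - grad (\<phi> i) xb) \<bullet> w + t * (D i w \<bullet> w)\<bar> = \<bar>?v \<bullet> w\<bar>"
      by (simp add: inner_diff_left inner_add_left)
    also have "\<dots> \<le> norm ?v * norm w" by (rule Cauchy_Schwarz_ineq2)
    also have "\<dots> \<le> \<eta> / (norm w + 1) * t * (norm w + 1)"
      using v order_trans[OF norm_ge_zero v] by (intro mult_mono) auto
    also have "\<dots> = \<eta> * t"
    proof -
      have "norm w + 1 \<noteq> 0" by (smt (verit) norm_ge_zero)
      then show ?thesis by simp
    qed
    finally show "\<bar>(grad (\<phi> i) (xb + t *\<^sub>R (- w)) - grad (\<phi> i) xb) \<bullet> w + t * (D i w \<bullet> w)\<bar>
        \<le> \<eta> * t" .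
  qed
qed

lemma multiplier_slope_expansion:
  assumes e: "e > 0"
  shows "eventually (\<lambda>t. \<bar>multiplier_slope (xb + t *\<^sub>R (- w)) - multiplier_slope xb
      + t * multiplier_curvature\<bar> \<le> e * t) (at_right 0)"
proof -
  define Y where "Y = (\<Sum>i\<in>Act \<union> Eq. \<bar>yb i\<bar>)"
  have Y: "Y \<ge> 0" unfolding Y_def by (simp add: sum_nonneg)
  define \<eta> where "\<eta> = e / (Y + 1)"
  have \<eta>: "\<eta> > 0" "Y * \<eta> \<le> e" using e Y by (auto simp: \<eta>_def field_simps)
  define \<Delta> where "\<Delta> i t = (grad (\<phi> i) (xb + t *\<^sub>R (- w)) - grad (\<phi> i) xb) \<bullet> w + t * (D i w \<bullet> w)"
    for i t
  have "eventually (\<lambda>t. \<forall>i\<in>Act \<union> Eq. \<bar>\<Delta> i t\<bar> \<le> \<eta> * t) (at_right 0)"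
    using finite_Act grad_phi_ray_expansion[OF _ \<eta>(1)] unfolding \<Delta>_def
    by (intro eventually_ball_finite) auto
  then show ?thesis
  proof (rule eventually_mono[OF eventually_conj[OF _ eventually_at_right_less]])
    fix t :: real assume h: "(\<forall>i\<in>Act \<union> Eq. \<bar>\<Delta> i t\<bar> \<le> \<eta> * t) \<and> 0 < t"
    have "multiplier_slope (xb + t *\<^sub>R (- w)) - multiplier_slope xb + t * multiplier_curvature
        = (\<Sum>i\<in>Act \<union> Eq. yb i * \<Delta> i t)"
      unfolding multiplier_slope_def multiplier_curvature_def \<Delta>_def
      by (simp add: sum_subtractf[symmetric] sum_distrib_left sum.distrib[symmetric]
          inner_diff_left algebra_simps)
    also have "\<bar>\<dots>\<bar> \<le> (\<Sum>i\<in>Act \<union> Eq. \<bar>yb i\<bar> * (\<eta> * t))"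
      by (rule order_trans[OF sum_abs sum_mono]) (use h in \<open>auto simp: abs_mult intro: mult_left_mono\<close>)
    also have "\<dots> = Y * \<eta> * t" unfolding Y_def by (simp add: sum_distrib_right mult.assoc)
    also have "\<dots> \<le> e * t" using \<eta>(2) h by (intro mult_right_mono) auto
    finally show "\<bar>multiplier_slope (xb + t *\<^sub>R (- w)) - multiplier_slope xb
        + t * multiplier_curvature\<bar> \<le> e * t" .
  qed
qed

text \<open>At the points xb - t w provided by the slope estimate, the regular normal (z, - w) and the
  expansion of the multiplier term bound the same quantity w \<bullet> (grad f (xb - t w) - grad f xb)
  from the two sides.\<close>

lemma second_order_inequality:
  assumes z: "z \<in> second_subdiff f xb w"
  shows "z \<bullet> w + multiplier_curvature \<ge> \<sigma> * (norm w)\<^sup>2"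
proof (rule field_le_epsilon)
  fix e :: real assume "e > 0"
  then have \<epsilon>: "e / 3 > 0" by simp
  obtain t where t: "t > 0"
    and normal: "- t * (z \<bullet> w) - w \<bullet> (grad f (xb + t *\<^sub>R (- w)) - grad f xb) \<le> e / 3 * t"
    and curv: "\<bar>multiplier_slope (xb + t *\<^sub>R (- w)) - multiplier_slope xb + t * multiplier_curvature\<bar>
        \<le> e / 3 * t"
    and slope: "lagrangian_grad (xb + t *\<^sub>R (- w)) \<bullet> w \<le> (e / 3 - \<sigma> * (norm w)\<^sup>2) * t"
    using exists_small_lagrangian_slope[OF \<epsilon> eventually_conj[OF
        second_subdiff_ray_bound[OF z \<epsilon>] multiplier_slope_expansion[OF \<epsilon>]]] by blast
  have "grad f xb \<bullet> w + multiplier_slope xb = 0"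
    using lagrangian_grad_inner_w[of xb] lagrangian_grad_xb by simp
  then have "w \<bullet> (grad f (xb + t *\<^sub>R (- w)) - grad f xb)
      = lagrangian_grad (xb + t *\<^sub>R (- w)) \<bullet> w - (multiplier_slope (xb + t *\<^sub>R (- w)) - multiplier_slope xb)"
    using lagrangian_grad_inner_w by (simp add: inner_diff_right inner_commute)
  moreover have "(e / 3 - \<sigma> * (norm w)\<^sup>2) * t = e / 3 * t - t * (\<sigma> * (norm w)\<^sup>2)"
    "t * (z \<bullet> w + multiplier_curvature + e) = t * (z \<bullet> w) + t * multiplier_curvature + 3 * (e / 3 * t)"
    by (simp_all add: algebra_simps)
  ultimately have "t * (\<sigma> * (norm w)\<^sup>2) \<le> t * (z \<bullet> w + multiplier_curvature + e)"
    using normal abs_le_D2[OF curv] slope by linarith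
  then show "\<sigma> * (norm w)\<^sup>2 \<le> z \<bullet> w + multiplier_curvature + e" using t by simp
qed

end

lemma (in nlp_local_growth) second_order_condition:
  assumes "lagrange_multipliers s m f \<phi> xb = {yb}" "w \<in> critical_cone s m \<phi> xb yb"
    and "z \<in> second_subdiff f xb w"
  shows "z \<bullet> w + hess_quad (\<lambda>x. \<Sum>i=1..m. yb i * \<phi> i x) xb w \<ge> \<sigma> * (norm w)\<^sup>2"
proof -
  interpret nlp_critical_direction f \<phi> s m xb r Lf D \<sigma> yb w
    using assms(1,2) by unfold_locales
  show ?thesis using second_order_inequality[OF assms(3)] hess_quad_multiplier_term by simp
qed

lemma nlp_local_growth_exists:
  fixes f :: "'a::euclidean_space \<Rightarrow> real" and \<phi> :: "nat \<Rightarrow> 'a \<Rightarrow> real"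
  assumes "s \<le> m" and f: "C11_near f xb" and \<phi>: "\<forall>i\<in>{1..m}. C2_near (\<phi> i) xb"
    and "MSCQ s m \<phi> xb"
  obtains r Lf D where "\<And>\<sigma>. \<sigma> \<ge> 0 \<Longrightarrow> strong_local_minimizer f (feasible_set s m \<phi>) xb \<sigma> \<Longrightarrow>
    nlp_local_growth f \<phi> s m xb r Lf D \<sigma>"
proof -
  obtain U Lf where U: "open U" "xb \<in> U" "\<And>x. x \<in> U \<Longrightarrow> f differentiable (at x)"
    and lip: "Lf-lipschitz_on U (grad f)"
    using f unfolding C11_near_def by blast
  have "\<forall>i\<in>{1..m}. \<exists>V (D2 :: 'a \<Rightarrow> ('a \<Rightarrow>\<^sub>L 'a)). open V \<and> xb \<in> V
      \<and> (\<forall>x\<in>V. \<phi> i differentiable (at x) \<and> (grad (\<phi> i) has_derivative blinfun_apply (D2 x)) (at x))"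
    using \<phi> unfolding C2_near_def by blast
  then obtain V D2 where V: "\<And>i. i \<in> {1..m} \<Longrightarrow> open (V i) \<and> xb \<in> V i
      \<and> (\<forall>x\<in>V i. \<phi> i differentiable (at x) \<and> (grad (\<phi> i) has_derivative blinfun_apply (D2 i x)) (at x))"
    by metis
  have "eventually (\<lambda>x. x \<in> U \<and> (\<forall>i\<in>{1..m}. x \<in> V i)) (nhds xb)"
    using U V by (intro eventually_conj eventually_ball_finite) (auto intro: eventually_nhds_in_open)
  then obtain r where r: "r > 0" and rb: "\<And>x. dist x xb < r \<Longrightarrow> x \<in> U \<and> (\<forall>i\<in>{1..m}. x \<in> V i)"
    unfolding eventually_nhds_metric by blast
  then have bU: "ball xb r \<subseteq> U" and bV: "\<And>x i. x \<in> ball xb r \<Longrightarrow> i \<in> {1..m} \<Longrightarrow> x \<in> V i"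
    by (auto simp: dist_commute)
  show ?thesis
  proof (rule that)
    fix \<sigma> :: real assume \<sigma>: "\<sigma> \<ge> 0" "strong_local_minimizer f (feasible_set s m \<phi>) xb \<sigma>"
    show "nlp_local_growth f \<phi> s m xb r Lf (\<lambda>i. blinfun_apply (D2 i xb)) \<sigma>"
    proof
      show "(f has_derivative (\<lambda>h. grad f x \<bullet> h)) (at x)" if "x \<in> ball xb r" for x
        using that bU U(3) by (intro has_derivative_grad) auto
      show "(\<phi> i has_derivative (\<lambda>h. grad (\<phi> i) x \<bullet> h)) (at x)"
        if "i \<in> {1..m}" "x \<in> ball xb r" for i x
        using V[OF that(1)] bV[OF that(2,1)] by (intro has_derivative_grad) auto
      show "(grad (\<phi> i) has_derivative blinfun_apply (D2 i xb)) (at xb)" if "i \<in> {1..m}" for i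
        using V[OF that] by auto
      show "Lf-lipschitz_on (ball xb r) (grad f)" using lip bU by (rule lipschitz_on_subset)
    qed (use assms r \<sigma> in \<open>auto simp: strong_local_minimizer_def\<close>)
  qed
qed

theorem theorem9p2:
  fixes f :: "'a::euclidean_space \<Rightarrow> real"
    and \<phi> :: "nat \<Rightarrow> 'a \<Rightarrow> real"
    and s m :: nat and xb :: 'a
  assumes "s \<le> m"
    and "C11_near f xb"
    and "\<forall>i\<in>{1..m}. C2_near (\<phi> i) xb"
    and "local_minimizer f (feasible_set s m \<phi>) xb"
    and "MSCQ s m \<phi> xb"
  shows "lagrange_multipliers s m f \<phi> xb \<noteq> {}
    \<and> (LICQ s m \<phi> xb \<longrightarrow> (\<exists>yb. lagrange_multipliers s m f \<phi> xb = {yb}))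
    \<and> (\<forall>yb. lagrange_multipliers s m f \<phi> xb = {yb} \<longrightarrow>
         (\<forall>w\<in>critical_cone s m \<phi> xb yb. \<forall>z\<in>second_subdiff f xb w.
            z \<bullet> w + hess_quad (\<lambda>x. \<Sum>i=1..m. yb i * \<phi> i x) xb w \<ge> 0)
       \<and> (\<forall>\<sigma>>0. strong_local_minimizer f (feasible_set s m \<phi>) xb \<sigma> \<longrightarrow>
         (\<forall>w\<in>critical_cone s m \<phi> xb yb. \<forall>z\<in>second_subdiff f xb w.
            z \<bullet> w + hess_quad (\<lambda>x. \<Sum>i=1..m. yb i * \<phi> i x) xb w \<ge> \<sigma> * (norm w)\<^sup>2)))"
proof -
  obtain r Lf D where growth: "\<And>\<sigma>. \<sigma> \<ge> 0 \<Longrightarrow> strong_local_minimizer f (feasible_set s m \<phi>) xb \<sigma> \<Longrightarrow>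
      nlp_local_growth f \<phi> s m xb r Lf D \<sigma>"
    using nlp_local_growth_exists[OF assms(1,2,3,5)] by blast
  have min0: "strong_local_minimizer f (feasible_set s m \<phi>) xb 0"
    using assms(4) by (auto simp: local_minimizer_def strong_local_minimizer_def dist_commute)
  then have local_min: "nlp_local_growth f \<phi> s m xb r Lf D 0" by (simp add: growth)
  have "z \<bullet> w + hess_quad (\<lambda>x. \<Sum>i=1..m. yb i * \<phi> i x) xb w \<ge> \<sigma> * (norm w)\<^sup>2"
    if "lagrange_multipliers s m f \<phi> xb = {yb}" "w \<in> critical_cone s m \<phi> xb yb"
      "z \<in> second_subdiff f xb w" "strong_local_minimizer f (feasible_set s m \<phi>) xb \<sigma>" "\<sigma> \<ge> 0"
    for yb w z \<sigma>
    using nlp_local_growth.second_order_condition[OF growth[OF that(5,4)] that(1-3)] .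
  then show ?thesis
    using nlp_local_growth.multipliers_nonempty[OF local_min] min0
      nlp_local_growth.LICQ_unique_multiplier[OF local_min]
    by fastforce
qed

end
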